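(* Let $\mathcal{O}_K$ be a discrete valuation ring with fraction field $K$ and valuation $v_K$, let $L/K$ be a finite separable extension of degree $n$ with a Hopf Galois structure $(H,\langle\,,\rangle)$, let $W$ be a $K$-basis of $H$ and $B=\{\gamma_j\}_{j=1}^n$ an $\mathcal{O}_K$-basis of $\mathcal{O}_L$. Let $\beta\in\mathcal{O}_L$. Then $\beta$ is a free generator of $\mathcal{O}_L$ as $\mathfrak{A}_H$-module (i.e. the map $\mathfrak{A}_H\to\mathcal{O}_L$, $h\mapsto\langle h,\beta\rangle$, is a bijection) if and only if $$v_K\big(\det M_\beta(H_W,L_B)\big)=I_W(H,L).$$
   Context: A Hopf Galois structure on $L/K$ is a $K$-Hopf algebra $H$ with a $K$-linear action $\langle\,,\rangle\colon H\otimes_K L\to L$ making $L$ an $H$-module algebra such that $L\otimes_K H\to\mathrm{End}_K(L)$ is bijective. The associated order is $\mathfrak{A}_H=\{h\in H:\langle h,x\rangle\in\mathcal{O}_L\ \forall x\in\mathcal{O}_L\}$. With $W=\{w_i\}$, write $\langle w_i,\gamma_j\rangle=\sum_k m_{ij}^{(k)}\gamma_k$; the matrix of the action $M(H_W,L_B)\in\mathcal{M}_{n^2\times n}(K)$ has entry $m_{ij}^{(k)}$ in row $n(j-1)+k$, column $i$. A reduced matrix of it is $D\in\mathrm{GL}_n(K)$ such that $U M(H_W,L_B)=\begin{pmatrix}D\\0\end{pmatrix}$ for some $U\in\mathrm{GL}_{n^2}(\mathcal{O}_K)$; such $D$ exists, and the index $I_W(H,L):=v_K(\det D)$ does not depend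 on the choice of $D$. For $\beta\in L$, $M_\beta(H_W,L_B)\in\mathcal{M}_n(K)$ is the matrix of the $K$-linear map $H\to L$, $h\mapsto\langle h,\beta\rangle$, with respect to the bases $W$ and $B$. *)

theory Defs
  imports "Jordan_Normal_Form.Determinant" "HOL-Computational_Algebra.Polynomial"
    "HOL-Library.Extended_Real"
begin

definition discrete_valuation :: "('k::field \<Rightarrow> ereal) \<Rightarrow> bool" where
  "discrete_valuation v \<longleftrightarrow>
     (\<forall>x. v x = \<infinity> \<longleftrightarrow> x = 0) \<and>
     (\<forall>x. x \<noteq> 0 \<longrightarrow> (\<exists>z::int. v x = ereal (real_of_int z))) \<and>
     (\<forall>x y. v (x * y) = v x + v y) \<and>
     (\<forall>x y. min (v x) (v y) \<le> v (x + y)) \<and>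
     (\<exists>p. v p = 1)"

definition val_ring :: "('k::field \<Rightarrow> ereal) \<Rightarrow> 'k set" where
  "val_ring v = {x. 0 \<le> v x}"

definition K_embedding :: "('k::field \<Rightarrow> 'l::field) \<Rightarrow> bool" where
  "K_embedding \<iota> \<longleftrightarrow> \<iota> 1 = 1 \<and> (\<forall>a b. \<iota> (a + b) = \<iota> a + \<iota> b) \<and>
     (\<forall>a b. \<iota> (a * b) = \<iota> a * \<iota> b)"

definition is_K_basis :: "('k::field \<Rightarrow> 'l::field) \<Rightarrow> nat \<Rightarrow> (nat \<Rightarrow> 'l) \<Rightarrow> bool" where
  "is_K_basis \<iota> n e \<longleftrightarrow>
     (\<forall>x. \<exists>!c. (\<forall>j\<ge>n. c j = 0) \<and> x = (\<Sum>j<n. \<iota> (c j) * e j))"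

definition ext_degree_eq :: "('k::field \<Rightarrow> 'l::field) \<Rightarrow> nat \<Rightarrow> bool" where
  "ext_degree_eq \<iota> n \<longleftrightarrow> (\<exists>e. is_K_basis \<iota> n e)"

definition separable_ext :: "('k::field \<Rightarrow> 'l::field) \<Rightarrow> bool" where
  "separable_ext \<iota> \<longleftrightarrow>
     (\<forall>x. \<exists>p::'k poly. p \<noteq> 0 \<and> coprime p (pderiv p) \<and> poly (map_poly \<iota> p) x = 0)"

definition int_closure :: "('k::field \<Rightarrow> ereal) \<Rightarrow> ('k \<Rightarrow> 'l::field) \<Rightarrow> 'l set" where
  "int_closure v \<iota> = {x. \<exists>p::'k poly. lead_coeff p = 1 \<and>
       (\<forall>i. coeff p i \<in> val_ring v) \<and> poly (map_poly \<iota> p) x = 0}"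

definition is_integral_basis ::
  "('k::field \<Rightarrow> ereal) \<Rightarrow> ('k \<Rightarrow> 'l::field) \<Rightarrow> nat \<Rightarrow> (nat \<Rightarrow> 'l) \<Rightarrow> bool" where
  "is_integral_basis v \<iota> n \<gamma> \<longleftrightarrow>
     (\<forall>j<n. \<gamma> j \<in> int_closure v \<iota>) \<and>
     (\<forall>c. (\<forall>j<n. c j \<in> val_ring v) \<longrightarrow> (\<Sum>j<n. \<iota> (c j) * \<gamma> j) = 0 \<longrightarrow> (\<forall>j<n. c j = 0)) \<and>
     int_closure v \<iota> \<subseteq> {(\<Sum>j<n. \<iota> (c j) * \<gamma> j) | c. \<forall>j<n. c j \<in> val_ring v}"

definition coordB :: "('k::field \<Rightarrow> 'l::field) \<Rightarrow> nat \<Rightarrow> (nat \<Rightarrow> 'l) \<Rightarrow> 'l \<Rightarrow> nat \<Rightarrow> 'k" where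
  "coordB \<iota> n \<gamma> x = (THE c. (\<forall>j\<ge>n. c j = 0) \<and> x = (\<Sum>j<n. \<iota> (c j) * \<gamma> j))"

text \<open>H is identified with K^n via W. Structure constants:
  w_i w_j = sum_k mu i j k w_k;  1_H = sum_k u k w_k;
  Delta(w_k) = sum_(i,j) dl k i j (w_i tensor w_j);  epsilon(w_k) = eps k;
  S(w_k) = sum_l S k l w_l;  act i x = <w_i, x>.\<close>

definition hopf_algebra_coords ::
  "nat \<Rightarrow> (nat \<Rightarrow> nat \<Rightarrow> nat \<Rightarrow> 'k::field) \<Rightarrow> (nat \<Rightarrow> 'k) \<Rightarrow> (nat \<Rightarrow> nat \<Rightarrow> nat \<Rightarrow> 'k)
     \<Rightarrow> (nat \<Rightarrow> 'k) \<Rightarrow> (nat \<Rightarrow> nat \<Rightarrow> 'k) \<Rightarrow> bool" where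
  "hopf_algebra_coords n mu u dl eps S \<longleftrightarrow>
    \<comment> \<open>associativity\<close>
    (\<forall>i<n. \<forall>j<n. \<forall>l<n. \<forall>k<n.
       (\<Sum>p<n. mu i j p * mu p l k) = (\<Sum>p<n. mu j l p * mu i p k)) \<and>
    \<comment> \<open>unit\<close>
    (\<forall>i<n. \<forall>k<n. (\<Sum>p<n. u p * mu p i k) = (if i = k then 1 else 0) \<and>
                  (\<Sum>p<n. u p * mu i p k) = (if i = k then 1 else 0)) \<and>
    \<comment> \<open>coassociativity\<close>
    (\<forall>k<n. \<forall>i<n. \<forall>j<n. \<forall>l<n.
       (\<Sum>p<n. dl k p l * dl p i j) = (\<Sum>p<n. dl k i p * dl p j l)) \<and>
    \<comment> \<open>counit\<close>
    (\<forall>k<n. \<forall>i<n. (\<Sum>p<n. eps p * dl k p i) = (if k = i then 1 else 0) \<and>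
                  (\<Sum>p<n. eps p * dl k i p) = (if k = i then 1 else 0)) \<and>
    \<comment> \<open>Delta is an algebra homomorphism\<close>
    (\<forall>i<n. \<forall>j<n. \<forall>a<n. \<forall>b<n.
       (\<Sum>p<n. mu i j p * dl p a b) =
       (\<Sum>a1<n. \<Sum>b1<n. \<Sum>a2<n. \<Sum>b2<n. dl i a1 b1 * dl j a2 b2 * mu a1 a2 a * mu b1 b2 b)) \<and>
    (\<forall>a<n. \<forall>b<n. (\<Sum>p<n. u p * dl p a b) = u a * u b) \<and>
    \<comment> \<open>epsilon is an algebra homomorphism\<close>
    (\<forall>i<n. \<forall>j<n. (\<Sum>p<n. mu i j p * eps p) = eps i * eps j) \<and>
    (\<Sum>p<n. u p * eps p) = 1 \<and>
    \<comment> \<open>antipode\<close>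
    (\<forall>k<n. \<forall>l<n.
       (\<Sum>a<n. \<Sum>b<n. dl k a b * (\<Sum>c<n. S a c * mu c b l)) = eps k * u l \<and>
       (\<Sum>a<n. \<Sum>b<n. dl k a b * (\<Sum>c<n. S b c * mu a c l)) = eps k * u l)"

definition K_linear_map :: "('k::field \<Rightarrow> 'l::field) \<Rightarrow> ('l \<Rightarrow> 'l) \<Rightarrow> bool" where
  "K_linear_map \<iota> f \<longleftrightarrow> (\<forall>x y. f (x + y) = f x + f y) \<and> (\<forall>c x. f (\<iota> c * x) = \<iota> c * f x)"

definition hopf_galois_coords ::
  "('k::field \<Rightarrow> 'l::field) \<Rightarrow> nat \<Rightarrow> (nat \<Rightarrow> nat \<Rightarrow> nat \<Rightarrow> 'k) \<Rightarrow> (nat \<Rightarrow> 'k)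
     \<Rightarrow> (nat \<Rightarrow> nat \<Rightarrow> nat \<Rightarrow> 'k) \<Rightarrow> (nat \<Rightarrow> 'k) \<Rightarrow> (nat \<Rightarrow> nat \<Rightarrow> 'k)
     \<Rightarrow> (nat \<Rightarrow> 'l \<Rightarrow> 'l) \<Rightarrow> bool" where
  "hopf_galois_coords \<iota> n mu u dl eps S act \<longleftrightarrow>
    hopf_algebra_coords n mu u dl eps S \<and>
    \<comment> \<open>K-linearity of the action in the L-argument\<close>
    (\<forall>i<n. K_linear_map \<iota> (act i)) \<and>
    \<comment> \<open>L is an H-module\<close>
    (\<forall>x. (\<Sum>p<n. \<iota> (u p) * act p x) = x) \<and>
    (\<forall>i<n. \<forall>j<n. \<forall>x. (\<Sum>p<n. \<iota> (mu i j p) * act p x) = act i (act j x)) \<and>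
    \<comment> \<open>L is an H-module algebra\<close>
    (\<forall>k<n. \<forall>x y. act k (x * y) = (\<Sum>a<n. \<Sum>b<n. \<iota> (dl k a b) * act a x * act b y)) \<and>
    (\<forall>k<n. act k 1 = \<iota> (eps k)) \<and>
    \<comment> \<open>L tensor_K H -> End_K(L) is bijective (L tensor H identified with L^n via W)\<close>
    bij_betw (\<lambda>x. \<lambda>y. \<Sum>i<n. x i * act i y) {x. \<forall>i\<ge>n. x i = 0} {f. K_linear_map \<iota> f}"

definition hact :: "('k::field \<Rightarrow> 'l::field) \<Rightarrow> nat \<Rightarrow> (nat \<Rightarrow> 'l \<Rightarrow> 'l) \<Rightarrow> (nat \<Rightarrow> 'k) \<Rightarrow> 'l \<Rightarrow> 'l" where
  "hact \<iota> n act a x = (\<Sum>i<n. \<iota> (a i) * act i x)"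

definition assoc_order ::
  "('k::field \<Rightarrow> ereal) \<Rightarrow> ('k \<Rightarrow> 'l::field) \<Rightarrow> nat \<Rightarrow> (nat \<Rightarrow> 'l \<Rightarrow> 'l) \<Rightarrow> (nat \<Rightarrow> 'k) set" where
  "assoc_order v \<iota> n act = {a. (\<forall>i\<ge>n. a i = 0) \<and>
      (\<forall>x\<in>int_closure v \<iota>. hact \<iota> n act a x \<in> int_closure v \<iota>)}"

text \<open>M(H_W, L_B): entry m_ij^(k) at row n*j+k, column i (0-based).\<close>
definition action_matrix ::
  "('k::field \<Rightarrow> 'l::field) \<Rightarrow> nat \<Rightarrow> (nat \<Rightarrow> 'l) \<Rightarrow> (nat \<Rightarrow> 'l \<Rightarrow> 'l) \<Rightarrow> 'k mat" where
  "action_matrix \<iota> n \<gamma> act =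
     mat (n * n) n (\<lambda>(r, i). coordB \<iota> n \<gamma> (act i (\<gamma> (r div n))) (r mod n))"

definition beta_matrix ::
  "('k::field \<Rightarrow> 'l::field) \<Rightarrow> nat \<Rightarrow> (nat \<Rightarrow> 'l) \<Rightarrow> (nat \<Rightarrow> 'l \<Rightarrow> 'l) \<Rightarrow> 'l \<Rightarrow> 'k mat" where
  "beta_matrix \<iota> n \<gamma> act \<beta> = mat n n (\<lambda>(k, i). coordB \<iota> n \<gamma> (act i \<beta>) k)"

definition entries_in :: "'a mat \<Rightarrow> 'a set \<Rightarrow> bool" where
  "entries_in A R \<longleftrightarrow> (\<forall>i<dim_row A. \<forall>j<dim_col A. A $$ (i, j) \<in> R)"

definition GL_over :: "nat \<Rightarrow> 'a::comm_ring_1 set \<Rightarrow> 'a mat \<Rightarrow> bool" where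
  "GL_over m R U \<longleftrightarrow> U \<in> carrier_mat m m \<and> entries_in U R \<and>
     (\<exists>V. V \<in> carrier_mat m m \<and> entries_in V R \<and> U * V = 1\<^sub>m m \<and> V * U = 1\<^sub>m m)"

definition is_reduced_matrix :: "('k::field \<Rightarrow> ereal) \<Rightarrow> nat \<Rightarrow> 'k mat \<Rightarrow> 'k mat \<Rightarrow> bool" where
  "is_reduced_matrix v n M D \<longleftrightarrow> D \<in> carrier_mat n n \<and> det D \<noteq> 0 \<and>
     (\<exists>U. GL_over (n * n) (val_ring v) U \<and> U * M = D @\<^sub>r 0\<^sub>m (n * n - n) n)"

text \<open>I_W(H,L) = v_K(det D) for a reduced matrix D (independent of the choice).\<close>
definition index_IW :: "('k::field \<Rightarrow> ereal) \<Rightarrow> nat \<Rightarrow> 'k mat \<Rightarrow> ereal" where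
  "index_IW v n M = v (det (SOME D. is_reduced_matrix v n M D))"

end

theory Submission
  imports Defs "Jordan_Normal_Form.Char_Poly"
begin

text \<open>
  A reduced matrix \<open>D\<close> of \<open>M(H\<^sub>W, L\<^sub>B)\<close> describes the
  associated order: \<open>h \<in> A\<^sub>H\<close> exactly when \<open>D [h]\<^sub>W\<close> is integral, so \<open>h \<mapsto> D [h]\<^sub>W\<close>
  identifies \<open>A\<^sub>H\<close> with \<open>O\<^sub>K\<^sup>n\<close>, while the integral basis \<open>B\<close> identifies \<open>O\<^sub>L\<close> with \<open>O\<^sub>K\<^sup>n\<close>.
  Under these identifications \<open>h \<mapsto> \<langle>h, \<beta>\<rangle>\<close> becomes multiplication by
  \<open>X = M\<^sub>\<beta> D\<^sup>-\<^sup>1\<close>, which maps \<open>O\<^sub>K\<^sup>n\<close> into itself. It is bijective iff \<open>X \<in> GL\<^sub>n(O\<^sub>K)\<close>,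
  i.e. iff \<open>v\<^sub>K(det X) = 0\<close>, i.e. iff \<open>v\<^sub>K(det M\<^sub>\<beta>) = v\<^sub>K(det D) = I\<^sub>W(H, L)\<close>.

  A reduced matrix exists by row reduction with pivots of minimal valuation. That \<open>O\<^sub>L\<close> is
  exactly the \<open>O\<^sub>K\<close>-span of \<open>B\<close> uses that integral elements are closed under
  \<open>O\<^sub>K\<close>-linear combinations, proved by the characteristic polynomial argument.
\<close>

section \<open>Discrete valuations\<close>

lemma mem_val_ring_iff: "x \<in> val_ring v \<longleftrightarrow> 0 \<le> v x"
  unfolding val_ring_def by simp

context
  fixes v :: "'k::field \<Rightarrow> ereal"
  assumes dv: "discrete_valuation v"
begin

lemma valuation_eq_infinity_iff: "v x = \<infinity> \<longleftrightarrow> x = 0"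
  using dv unfolding discrete_valuation_def by blast

lemma nonzero_if_valuation_eq_0:
  assumes "v x = 0"
  shows "x \<noteq> 0"
proof
  assume "x = 0"
  then have "v x = \<infinity>" using valuation_eq_infinity_iff by blast
  then show False using assms by simp
qed

lemma valuation_integral: "x \<noteq> 0 \<Longrightarrow> \<exists>z::int. v x = ereal (real_of_int z)"
  using dv unfolding discrete_valuation_def by blast

lemma valuation_mult: "v (x * y) = v x + v y"
  using dv unfolding discrete_valuation_def by blast

lemma valuation_add: "min (v x) (v y) \<le> v (x + y)"
  using dv unfolding discrete_valuation_def by blast

lemma valuation_one: "v 1 = 0"
proof -
  obtain z where z: "v 1 = ereal (real_of_int z)" using valuation_integral[of 1] by auto
  have "v (1 * 1) = v 1 + v 1" by (rule valuation_mult)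
  then show ?thesis using z by simp
qed

lemma valuation_uminus: "v (- x) = v x"
proof -
  obtain z where z: "v (-1) = ereal (real_of_int z)" using valuation_integral[of "-1"] by auto
  have "v ((-1) * (-1)) = v (-1) + v (-1)" by (rule valuation_mult)
  then have "v (-1) = 0" using z valuation_one by simp
  then show ?thesis using valuation_mult[of "-1" x] by simp
qed

lemma valuation_inverse: "x \<noteq> 0 \<Longrightarrow> v (inverse x) = - v x"
proof -
  assume x: "x \<noteq> 0"
  obtain z where z: "v x = ereal (real_of_int z)" using valuation_integral[OF x] by auto
  obtain w where w: "v (inverse x) = ereal (real_of_int w)"
    using valuation_integral[of "inverse x"] x by auto
  have "v (x * inverse x) = v x + v (inverse x)" by (rule valuation_mult)
  then show ?thesis using x valuation_one z w by simp
qed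

lemma valuation_mult_eq_right_iff:
  assumes "y \<noteq> 0"
  shows "v (x * y) = v y \<longleftrightarrow> v x = 0"
proof -
  obtain z where z: "v y = ereal (real_of_int z)" using valuation_integral[OF assms] by blast
  show ?thesis unfolding valuation_mult z by (cases "v x") simp_all
qed

lemma val_ring_zero [simp]: "0 \<in> val_ring v"
  using valuation_eq_infinity_iff[of 0] by (simp add: mem_val_ring_iff)

lemma val_ring_one [simp]: "1 \<in> val_ring v"
  using valuation_one by (simp add: mem_val_ring_iff)

lemma val_ring_add: "x \<in> val_ring v \<Longrightarrow> y \<in> val_ring v \<Longrightarrow> x + y \<in> val_ring v"
  unfolding mem_val_ring_iff using valuation_add[of x y] by (meson min.boundedI order_trans)

lemma val_ring_mult: "x \<in> val_ring v \<Longrightarrow> y \<in> val_ring v \<Longrightarrow> x * y \<in> val_ring v"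
  unfolding mem_val_ring_iff valuation_mult by (rule add_nonneg_nonneg)

lemma val_ring_uminus: "x \<in> val_ring v \<Longrightarrow> - x \<in> val_ring v"
  unfolding mem_val_ring_iff valuation_uminus .

lemma val_ring_diff: "x \<in> val_ring v \<Longrightarrow> y \<in> val_ring v \<Longrightarrow> x - y \<in> val_ring v"
  unfolding diff_conv_add_uminus by (intro val_ring_add val_ring_uminus)

lemma val_ring_sum: "(\<And>i. i \<in> A \<Longrightarrow> f i \<in> val_ring v) \<Longrightarrow> sum f A \<in> val_ring v"
  by (induction A rule: infinite_finite_induct) (auto intro: val_ring_add)

lemma val_ring_power: "x \<in> val_ring v \<Longrightarrow> x ^ k \<in> val_ring v"
  by (induction k) (auto intro: val_ring_mult)

lemma val_ring_divide: "y \<noteq> 0 \<Longrightarrow> v y \<le> v x \<Longrightarrow> x / y \<in> val_ring v"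
proof (cases "x = 0")
  case False
  assume y: "y \<noteq> 0" and le: "v y \<le> v x"
  obtain z where z: "v x = ereal (real_of_int z)" using valuation_integral[OF False] by auto
  obtain w where w: "v y = ereal (real_of_int w)" using valuation_integral[OF y] by auto
  have "v (x / y) = v x + v (inverse y)" using valuation_mult[of x "inverse y"] by (simp add: divide_inverse)
  then show ?thesis using valuation_inverse[OF y] le z w by (simp add: mem_val_ring_iff)
qed simp

lemma inverse_in_val_ring_iff:
  "x \<in> val_ring v \<Longrightarrow> x \<noteq> 0 \<Longrightarrow> inverse x \<in> val_ring v \<longleftrightarrow> v x = 0"
  using valuation_inverse[of x] by (auto simp: mem_val_ring_iff)

lemma val_ring_common_denominator:
  assumes "finite A"
  shows "\<exists>t \<in> val_ring v. t \<noteq> 0 \<and> (\<forall>i\<in>A. t * f i \<in> val_ring v)"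
  using assms
proof (induction A rule: finite_induct)
  case empty
  then show ?case by (intro bexI[of _ 1]) auto
next
  case (insert a A)
  then obtain t where t: "t \<in> val_ring v" "t \<noteq> 0" "\<forall>i\<in>A. t * f i \<in> val_ring v" by auto
  obtain s where s: "s \<in> val_ring v" "s \<noteq> 0" "s * f a \<in> val_ring v"
  proof (cases "f a \<in> val_ring v")
    case False
    then have "f a \<noteq> 0" "v (f a) < 0" using val_ring_zero by (auto simp: mem_val_ring_iff)
    then show ?thesis using valuation_inverse[of "f a"] by (intro that[of "inverse (f a)"])
        (auto simp: mem_val_ring_iff valuation_one)
  qed (use that[of 1] in auto)
  have "s * t * f i \<in> val_ring v" if "i \<in> insert a A" for i
    using that val_ring_mult[OF s(1) t(3)[rule_format]] val_ring_mult[OF t(1) s(3)]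
    by (auto simp: ac_simps)
  then show ?case using s t by (intro bexI[of _ "s * t"]) (auto intro: val_ring_mult)
qed

end

section \<open>Matrices over the valuation ring\<close>

lemma det_in_subring:
  fixes R :: "'a::comm_ring_1 set"
  assumes "0 \<in> R" "1 \<in> R" "\<And>x y. x \<in> R \<Longrightarrow> y \<in> R \<Longrightarrow> x + y \<in> R"
    "\<And>x y. x \<in> R \<Longrightarrow> y \<in> R \<Longrightarrow> x * y \<in> R" "\<And>x. x \<in> R \<Longrightarrow> - x \<in> R"
    and A: "entries_in A R"
  shows "det A \<in> R"
proof -
  have sum: "(\<And>i. i \<in> B \<Longrightarrow> f i \<in> R) \<Longrightarrow> sum f B \<in> R" for f and B :: "'b set"
    by (induction B rule: infinite_finite_induct) (use assms in auto)
  have prod: "(\<And>i. i \<in> B \<Longrightarrow> f i \<in> R) \<Longrightarrow> prod f B \<in> R" for f and B :: "'b set"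
    by (induction B rule: infinite_finite_induct) (use assms in auto)
  have sign: "signof p \<in> R" for p :: "nat \<Rightarrow> nat" using assms by (simp add: sign_def)
  show ?thesis
  proof (cases "dim_row A = dim_col A")
    case True
    have "A $$ (i, p i) \<in> R" if "p permutes {0..<dim_row A}" "i \<in> {0..<dim_row A}" for p i
      using A True permutes_in_image[OF that(1)] that(2) unfolding entries_in_def by auto
    then show ?thesis unfolding det_def if_P[OF True]
      by (intro sum assms(4)[OF sign] prod) auto
  qed (simp add: det_def assms(1))
qed

lemma adj_mat_inverse:
  assumes A: "(A :: 'a::field mat) \<in> carrier_mat n n" and d: "det A \<noteq> 0"
  shows "A * (inverse (det A) \<cdot>\<^sub>m adj_mat A) = 1\<^sub>m n"
    and "(inverse (det A) \<cdot>\<^sub>m adj_mat A) * A = 1\<^sub>m n"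
    and "inverse (det A) \<cdot>\<^sub>m adj_mat A \<in> carrier_mat n n"
proof -
  have adj: "adj_mat A \<in> carrier_mat n n" using adj_mat[OF A] by simp
  have "A * (inverse (det A) \<cdot>\<^sub>m adj_mat A) = inverse (det A) \<cdot>\<^sub>m (A * adj_mat A)"
    using A adj by (rule mult_smult_distrib)
  also have "\<dots> = 1\<^sub>m n" unfolding adj_mat(2)[OF A] using d by (intro eq_matI) auto
  finally show "A * (inverse (det A) \<cdot>\<^sub>m adj_mat A) = 1\<^sub>m n" .
  have "(inverse (det A) \<cdot>\<^sub>m adj_mat A) * A = inverse (det A) \<cdot>\<^sub>m (adj_mat A * A)"
    using adj A by (rule mult_smult_assoc_mat)
  also have "\<dots> = 1\<^sub>m n" unfolding adj_mat(3)[OF A] using d by (intro eq_matI) auto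
  finally show "(inverse (det A) \<cdot>\<^sub>m adj_mat A) * A = 1\<^sub>m n" .
  show "inverse (det A) \<cdot>\<^sub>m adj_mat A \<in> carrier_mat n n" using adj by simp
qed

definition integral_vecs :: "('k::field \<Rightarrow> ereal) \<Rightarrow> nat \<Rightarrow> 'k vec set" where
  "integral_vecs v m = {w \<in> carrier_vec m. \<forall>i<m. w $ i \<in> val_ring v}"

context
  fixes v :: "'k::field \<Rightarrow> ereal"
  assumes dv: "discrete_valuation v"
begin

lemma det_in_val_ring: "entries_in A (val_ring v) \<Longrightarrow> det A \<in> val_ring v"
  by (rule det_in_subring)
    (auto simp: val_ring_zero[OF dv] val_ring_one[OF dv]
      intro: val_ring_add[OF dv] val_ring_mult[OF dv] val_ring_uminus[OF dv])

lemma adj_mat_entries_in_val_ring: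
  assumes A: "A \<in> carrier_mat n n" "entries_in A (val_ring v)"
  shows "entries_in (adj_mat A) (val_ring v)"
  unfolding entries_in_def
proof (intro allI impI)
  fix i j assume ij: "i < dim_row (adj_mat A)" "j < dim_col (adj_mat A)"
  then have ij': "i < n" "j < n" using adj_mat(1)[OF A(1)] by auto
  have "entries_in (mat_delete A j i) (val_ring v)"
    using A unfolding entries_in_def mat_delete_def by auto
  then have "det (mat_delete A j i) \<in> val_ring v" by (rule det_in_val_ring)
  moreover have "(-1::'k) ^ (j + i) \<in> val_ring v" by (intro val_ring_power val_ring_uminus dv val_ring_one)
  ultimately show "adj_mat A $$ (i, j) \<in> val_ring v"
    using ij' A(1) unfolding adj_mat_def cofactor_def by (auto intro: val_ring_mult[OF dv])
qed

lemma entries_in_mult: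
  assumes "A \<in> carrier_mat a b" "B \<in> carrier_mat b c"
    "entries_in A (val_ring v)" "entries_in B (val_ring v)"
  shows "entries_in (A * B) (val_ring v)"
  unfolding entries_in_def
proof (intro allI impI)
  fix i j assume ij: "i < dim_row (A * B)" "j < dim_col (A * B)"
  have "(A * B) $$ (i, j) = (\<Sum>l\<in>{0..<b}. A $$ (i, l) * B $$ (l, j))"
    using assms ij by (simp add: scalar_prod_def)
  also have "\<dots> \<in> val_ring v" using assms ij unfolding entries_in_def
    by (intro val_ring_sum[OF dv] val_ring_mult[OF dv]) auto
  finally show "(A * B) $$ (i, j) \<in> val_ring v" .
qed

lemma GL_over_mult:
  assumes "GL_over m (val_ring v) U" "GL_over m (val_ring v) W"
  shows "GL_over m (val_ring v) (U * W)"
proof -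
  from assms obtain U' W' where U: "U \<in> carrier_mat m m" "entries_in U (val_ring v)"
    "U' \<in> carrier_mat m m" "entries_in U' (val_ring v)" "U * U' = 1\<^sub>m m" "U' * U = 1\<^sub>m m"
    and W: "W \<in> carrier_mat m m" "entries_in W (val_ring v)" "W' \<in> carrier_mat m m"
    "entries_in W' (val_ring v)" "W * W' = 1\<^sub>m m" "W' * W = 1\<^sub>m m"
    unfolding GL_over_def by blast
  have "U * W * (W' * U') = U * (W * (W' * U'))" using U W by (intro assoc_mult_mat) auto
  also have "W * (W' * U') = (W * W') * U'" using U W by (intro assoc_mult_mat[symmetric]) auto
  also have "U * ((W * W') * U') = 1\<^sub>m m" using U W by simp
  finally have right: "U * W * (W' * U') = 1\<^sub>m m" .
  have "W' * U' * (U * W) = W' * (U' * (U * W))" using U W by (intro assoc_mult_mat) auto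
  also have "U' * (U * W) = (U' * U) * W" using U W by (intro assoc_mult_mat[symmetric]) auto
  also have "W' * ((U' * U) * W) = 1\<^sub>m m" using U W by simp
  finally have left: "W' * U' * (U * W) = 1\<^sub>m m" .
  show ?thesis unfolding GL_over_def
    using U W left right by (intro conjI exI[of _ "W' * U'"]) (auto intro: entries_in_mult)
qed

lemma entries_in_one_mat: "entries_in (1\<^sub>m m) (val_ring v)"
  unfolding entries_in_def using dv by auto

lemma GL_over_one: "GL_over m (val_ring v) (1\<^sub>m m)"
  unfolding GL_over_def using entries_in_one_mat by (intro conjI exI[of _ "1\<^sub>m m"]) auto

lemma GL_over_one_plus_square_zero:
  assumes N: "N \<in> carrier_mat m m" "entries_in N (val_ring v)" "N * N = 0\<^sub>m m m"
  shows "GL_over m (val_ring v) (1\<^sub>m m + N)"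
proof -
  have "entries_in (1\<^sub>m m + N) (val_ring v)" "entries_in (1\<^sub>m m - N) (val_ring v)"
    using N dv unfolding entries_in_def by (auto intro!: val_ring_add[OF dv] val_ring_diff[OF dv] val_ring_uminus[OF dv])
  moreover have "(1\<^sub>m m + N) * (1\<^sub>m m - N) = 1\<^sub>m m"
  proof -
    have "(1\<^sub>m m + N) * (1\<^sub>m m - N) = 1\<^sub>m m * (1\<^sub>m m - N) + N * (1\<^sub>m m - N)"
      using N by (intro add_mult_distrib_mat) auto
    also have "\<dots> = (1\<^sub>m m - N) + (N * 1\<^sub>m m - N * N)"
      using N by (subst mult_minus_distrib_mat) auto
    also have "\<dots> = 1\<^sub>m m" using N by (intro eq_matI) auto
    finally show ?thesis .
  qed
  moreover have "(1\<^sub>m m - N) * (1\<^sub>m m + N) = 1\<^sub>m m"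
  proof -
    have "(1\<^sub>m m - N) * (1\<^sub>m m + N) = 1\<^sub>m m * (1\<^sub>m m + N) - N * (1\<^sub>m m + N)"
      using N by (intro minus_mult_distrib_mat) auto
    also have "\<dots> = (1\<^sub>m m + N) - (N * 1\<^sub>m m + N * N)"
      using N by (subst mult_add_distrib_mat) auto
    also have "\<dots> = 1\<^sub>m m" using N by (intro eq_matI) auto
    finally show ?thesis .
  qed
  ultimately show ?thesis unfolding GL_over_def using N
    by (intro conjI exI[of _ "1\<^sub>m m - N"]) auto
qed

lemma GL_over_swaprows_mat:
  assumes "k < m" "l < m"
  shows "GL_over m (val_ring v) (swaprows_mat m k l)"
proof -
  have "entries_in (swaprows_mat m k l) (val_ring v)"
    unfolding entries_in_def using dv by auto
  then show ?thesis unfolding GL_over_def using swaprows_mat_inv[OF assms]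
    by (intro conjI exI[of _ "swaprows_mat m k l"]) auto
qed

lemma char_poly_coeff_in_val_ring:
  assumes C: "C \<in> carrier_mat d d" "entries_in C (val_ring v)"
  shows "coeff (char_poly C) i \<in> val_ring v"
proof -
  let ?R = "{q. \<forall>i. coeff q i \<in> val_ring v}"
  have "char_poly C \<in> ?R" unfolding char_poly_def
  proof (rule det_in_subring)
    show "entries_in (char_poly_matrix C) ?R" unfolding entries_in_def
    proof (intro allI impI)
      fix i j assume "i < dim_row (char_poly_matrix C)" "j < dim_col (char_poly_matrix C)"
      then have ij: "i < d" "j < d" using char_poly_matrix_closed[OF C(1)] by auto
      then have "char_poly_matrix C $$ (i, j) = pCons (- C $$ (i, j)) (if i = j then 1 else 0)"
        using C unfolding char_poly_matrix_def by (cases "i = j") (simp_all add: one_pCons)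
      then show "char_poly_matrix C $$ (i, j) \<in> ?R"
        using C(2) ij C(1) val_ring_zero[OF dv] val_ring_one[OF dv] val_ring_uminus[OF dv]
        unfolding entries_in_def by (auto simp: coeff_pCons split: nat.split)
    qed
  qed (auto simp: coeff_1 coeff_mult val_ring_zero[OF dv] val_ring_one[OF dv]
      intro!: val_ring_add[OF dv] val_ring_uminus[OF dv] val_ring_sum[OF dv] val_ring_mult[OF dv])
  then show ?thesis by simp
qed

lemma mult_mat_vec_integral:
  assumes A: "A \<in> carrier_mat m k" "entries_in A (val_ring v)" and w: "w \<in> integral_vecs v k"
  shows "A *\<^sub>v w \<in> integral_vecs v m"
  unfolding integral_vecs_def
proof (intro CollectI conjI allI impI)
  show "A *\<^sub>v w \<in> carrier_vec m" using A(1) by (rule mult_mat_vec_carrier) (use w in \<open>simp add: integral_vecs_def\<close>)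
  fix i assume i: "i < m"
  have "(A *\<^sub>v w) $ i = (\<Sum>j\<in>{0..<k}. A $$ (i, j) * w $ j)"
    using A w i by (auto simp: scalar_prod_def integral_vecs_def intro!: sum.cong)
  also have "\<dots> \<in> val_ring v" using A w i unfolding entries_in_def integral_vecs_def
    by (intro val_ring_sum[OF dv] val_ring_mult[OF dv]) auto
  finally show "(A *\<^sub>v w) $ i \<in> val_ring v" .
qed

lemma GL_over_mult_vec_integral_iff:
  assumes U: "GL_over m (val_ring v) U" and w: "w \<in> carrier_vec m"
  shows "U *\<^sub>v w \<in> integral_vecs v m \<longleftrightarrow> w \<in> integral_vecs v m"
proof
  obtain V where U': "U \<in> carrier_mat m m" "entries_in U (val_ring v)"
    and V: "V \<in> carrier_mat m m" "entries_in V (val_ring v)" "V * U = 1\<^sub>m m"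
    using U unfolding GL_over_def by blast
  assume "U *\<^sub>v w \<in> integral_vecs v m"
  then have "V *\<^sub>v (U *\<^sub>v w) \<in> integral_vecs v m" by (rule mult_mat_vec_integral[OF V(1,2)])
  also have "V *\<^sub>v (U *\<^sub>v w) = w"
    using U' V w by (simp add: assoc_mult_mat_vec[symmetric, of _ m m _ m])
  finally show "w \<in> integral_vecs v m" .
next
  assume "w \<in> integral_vecs v m"
  then show "U *\<^sub>v w \<in> integral_vecs v m"
    using U mult_mat_vec_integral unfolding GL_over_def by blast
qed

lemma unit_vec_integral: "unit_vec n j \<in> integral_vecs v n"
  using val_ring_zero[OF dv] val_ring_one[OF dv] unfolding integral_vecs_def unit_vec_def by auto

lemma entries_in_if_integral_vecs_closed:
  assumes A: "A \<in> carrier_mat m n"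
    and closed: "\<And>w. w \<in> integral_vecs v n \<Longrightarrow> A *\<^sub>v w \<in> integral_vecs v m"
  shows "entries_in A (val_ring v)"
  unfolding entries_in_def
proof (intro allI impI)
  fix i j assume i: "i < dim_row A" and j: "j < dim_col A"
  have "(A *\<^sub>v unit_vec n j) $ i \<in> val_ring v"
    using closed[OF unit_vec_integral] i A unfolding integral_vecs_def by auto
  then show "A $$ (i, j) \<in> val_ring v" using A i j by simp
qed

lemma valuation_det_eq_0_if_right_inverse:
  assumes A: "A \<in> carrier_mat n n" "entries_in A (val_ring v)"
    and Z: "Z \<in> carrier_mat n n" "entries_in Z (val_ring v)" and AZ: "A * Z = 1\<^sub>m n"
  shows "v (det A) = 0"
proof -
  have "det A * det Z = 1" using det_mult[OF A(1) Z(1)] AZ by simp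
  then have "v (det A) + v (det Z) = 0"
    using valuation_mult[OF dv, of "det A" "det Z"] valuation_one[OF dv] by simp
  moreover have "0 \<le> v (det A)" "0 \<le> v (det Z)"
    using det_in_val_ring A(2) Z(2) mem_val_ring_iff by blast+
  ultimately show ?thesis by (simp add: add_nonneg_eq_0_iff)
qed

lemma inverse_mat_entries_in_val_ring:
  assumes A: "A \<in> carrier_mat n n" "entries_in A (val_ring v)" and unit: "v (det A) = 0"
  shows "entries_in (inverse (det A) \<cdot>\<^sub>m adj_mat A) (val_ring v)"
proof -
  have "det A \<noteq> 0" by (rule nonzero_if_valuation_eq_0[OF dv unit])
  then have "inverse (det A) \<in> val_ring v"
    using inverse_in_val_ring_iff[OF dv det_in_val_ring[OF A(2)]] unit by simp
  then show ?thesis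
    using adj_mat_entries_in_val_ring[OF A] adj_mat(1)[OF A(1)]
    unfolding entries_in_def by (auto intro: val_ring_mult[OF dv])
qed

lemma bij_integral_vecs_iff_det_unit:
  assumes A: "A \<in> carrier_mat n n" "entries_in A (val_ring v)"
  shows "bij_betw ((*\<^sub>v) A) (integral_vecs v n) (integral_vecs v n) \<longleftrightarrow> v (det A) = 0"
proof
  assume "bij_betw ((*\<^sub>v) A) (integral_vecs v n) (integral_vecs v n)"
  then have "unit_vec n j \<in> (*\<^sub>v) A ` integral_vecs v n" for j
    using unit_vec_integral unfolding bij_betw_def by simp
  then have "\<forall>j. \<exists>z. z \<in> integral_vecs v n \<and> A *\<^sub>v z = unit_vec n j"
    by (metis imageE)
  then obtain z where z: "\<And>j. z j \<in> integral_vecs v n" "\<And>j. A *\<^sub>v z j = unit_vec n j"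
    by metis
  define Z where "Z = mat n n (\<lambda>(i, j). z j $ i)"
  have Z: "Z \<in> carrier_mat n n" unfolding Z_def by simp
  have "(A * Z) $$ (i, j) = (A *\<^sub>v z j) $ i" if "i < n" "j < n" for i j
  proof -
    have "col Z j = z j"
      using z(1)[of j] that unfolding Z_def integral_vecs_def by (intro eq_vecI) auto
    then show ?thesis using A(1) Z that by simp
  qed
  then have "A * Z = 1\<^sub>m n" using A(1) Z z(2) by (intro eq_matI) auto
  moreover have "entries_in Z (val_ring v)"
    using z(1) unfolding entries_in_def Z_def integral_vecs_def by auto
  ultimately show "v (det A) = 0" using valuation_det_eq_0_if_right_inverse[OF A Z] by blast
next
  assume unit: "v (det A) = 0"
  then have "det A \<noteq> 0" by (rule nonzero_if_valuation_eq_0[OF dv])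
  define B where "B = inverse (det A) \<cdot>\<^sub>m adj_mat A"
  have B: "A * B = 1\<^sub>m n" "B * A = 1\<^sub>m n" "B \<in> carrier_mat n n" "entries_in B (val_ring v)"
    unfolding B_def using adj_mat_inverse[OF A(1) \<open>det A \<noteq> 0\<close>]
      inverse_mat_entries_in_val_ring[OF A unit] by auto
  show "bij_betw ((*\<^sub>v) A) (integral_vecs v n) (integral_vecs v n)"
  proof (rule bij_betw_byWitness[where f' = "(*\<^sub>v) B"])
    show "\<forall>w\<in>integral_vecs v n. B *\<^sub>v (A *\<^sub>v w) = w" "\<forall>w\<in>integral_vecs v n. A *\<^sub>v (B *\<^sub>v w) = w"
      using A(1) B unfolding integral_vecs_def
      by (auto simp: assoc_mult_mat_vec[symmetric, of _ n n _ n])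
    show "(*\<^sub>v) A ` integral_vecs v n \<subseteq> integral_vecs v n"
      "(*\<^sub>v) B ` integral_vecs v n \<subseteq> integral_vecs v n"
      using mult_mat_vec_integral A B(3,4) by auto
  qed
qed

section \<open>Reduced matrices\<close>

text \<open>Minimality of the valuation of the pivot makes the multipliers \<open>C\<^sub>i\<^sub>k / C\<^sub>r\<^sub>k\<close> integral.\<close>

lemma clear_below_pivot:
  assumes C: "C \<in> carrier_mat m n" and r: "r < m" and k: "k < n" and pivot: "C $$ (r, k) \<noteq> 0"
    and minimal: "\<And>i. r < i \<Longrightarrow> i < m \<Longrightarrow> v (C $$ (r, k)) \<le> v (C $$ (i, k))"
  shows "\<exists>U. GL_over m (val_ring v) U \<and> (\<forall>i<m. \<forall>j<n. (U * C) $$ (i, j) =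
    (if r < i then C $$ (i, j) - C $$ (i, k) / C $$ (r, k) * C $$ (r, j) else C $$ (i, j)))"
proof -
  define N where
    "N = mat m m (\<lambda>(i, l). if l = r \<and> r < i then - (C $$ (i, k) / C $$ (r, k)) else 0)"
  have N: "N \<in> carrier_mat m m" unfolding N_def by simp
  have "entries_in N (val_ring v)"
    using minimal pivot val_ring_zero[OF dv] unfolding entries_in_def N_def
    by (auto intro!: val_ring_uminus[OF dv] val_ring_divide[OF dv])
  moreover have "N * N = 0\<^sub>m m m"
  proof (rule eq_matI)
    fix i j assume ij: "i < dim_row (0\<^sub>m m m :: 'k mat)" "j < dim_col (0\<^sub>m m m :: 'k mat)"
    have "(N * N) $$ (i, j) = (\<Sum>l\<in>{0..<m}. N $$ (i, l) * N $$ (l, j))"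
      using ij N by (simp add: scalar_prod_def)
    also have "\<dots> = 0" by (rule sum.neutral) (use ij in \<open>auto simp: N_def\<close>)
    finally show "(N * N) $$ (i, j) = (0\<^sub>m m m :: 'k mat) $$ (i, j)" using ij by simp
  qed (use N in auto)
  ultimately have U: "GL_over m (val_ring v) (1\<^sub>m m + N)"
    using N GL_over_one_plus_square_zero by blast
  have "((1\<^sub>m m + N) * C) $$ (i, j) =
    (if r < i then C $$ (i, j) - C $$ (i, k) / C $$ (r, k) * C $$ (r, j) else C $$ (i, j))"
    if ij: "i < m" "j < n" for i j
  proof -
    have "(N * C) $$ (i, j) = (\<Sum>l\<in>{0..<m}. N $$ (i, l) * C $$ (l, j))"
      using ij N C by (simp add: scalar_prod_def)
    also have "\<dots> = (\<Sum>l\<in>{0..<m}. if l = r then (if r < i then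
        - (C $$ (i, k) / C $$ (r, k)) * C $$ (r, j) else 0) else 0)"
      by (intro sum.cong) (use ij in \<open>auto simp: N_def\<close>)
    also have "\<dots> = (if r < i then - (C $$ (i, k) / C $$ (r, k)) * C $$ (r, j) else 0)"
      using r by simp
    finally have "(N * C) $$ (i, j) = \<dots>" .
    moreover have "(1\<^sub>m m + N) * C = 1\<^sub>m m * C + N * C"
      using N C by (intro add_mult_distrib_mat) auto
    then have "((1\<^sub>m m + N) * C) $$ (i, j) = C $$ (i, j) + (N * C) $$ (i, j)"
      using ij N C by simp
    ultimately show ?thesis by simp
  qed
  then show ?thesis using U by blast
qed

lemma exists_pivot_of_minimal_valuation:
  fixes f :: "nat \<Rightarrow> 'k"
  assumes "r \<le> i0" "i0 < m" "f i0 \<noteq> 0"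
  obtains p where "r \<le> p" "p < m" "f p \<noteq> 0" "\<And>i. r \<le> i \<Longrightarrow> i < m \<Longrightarrow> v (f p) \<le> v (f i)"
proof -
  define S where "S = {r..<m}"
  define p where "p = arg_min_on (\<lambda>i. v (f i)) S"
  have S: "finite S" "S \<noteq> {}" using assms unfolding S_def by auto
  have p: "r \<le> p" "p < m" using arg_min_if_finite(1)[OF S] unfolding p_def S_def by auto
  have p_min: "v (f p) \<le> v (f i)" if "r \<le> i" "i < m" for i
    using arg_min_least[OF S, of i] that unfolding p_def S_def by auto
  have "f p \<noteq> 0"
  proof
    assume "f p = 0"
    then have "v (f p) = \<infinity>" using valuation_eq_infinity_iff[OF dv] by blast
    then have "v (f i0) = \<infinity>" by (rule ereal_infty_less_eq2(1)[OF p_min[OF assms(1,2)]])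
    then show False using assms(3) valuation_eq_infinity_iff[OF dv] by blast
  qed
  then show ?thesis using that p p_min by blast
qed

lemma GL_over_clear_column:
  assumes B: "B \<in> carrier_mat m n" and r: "r < m" and k: "k < n"
  shows "\<exists>U. GL_over m (val_ring v) U \<and> (\<forall>i. r < i \<longrightarrow> i < m \<longrightarrow> (U * B) $$ (i, k) = 0) \<and>
    (\<forall>j<n. (\<forall>i. r \<le> i \<longrightarrow> i < m \<longrightarrow> B $$ (i, j) = 0) \<longrightarrow>
      (\<forall>i. r \<le> i \<longrightarrow> i < m \<longrightarrow> (U * B) $$ (i, j) = 0))"
proof (cases "\<forall>i. r \<le> i \<longrightarrow> i < m \<longrightarrow> B $$ (i, k) = 0")
  case True
  then show ?thesis using GL_over_one B by (intro exI[of _ "1\<^sub>m m"]) auto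
next
  case False
  then obtain i0 where i0: "r \<le> i0" "i0 < m" "B $$ (i0, k) \<noteq> 0" by auto
  obtain p where p: "r \<le> p" "p < m" and pivot: "B $$ (p, k) \<noteq> 0"
    and p_min: "\<And>i. r \<le> i \<Longrightarrow> i < m \<Longrightarrow> v (B $$ (p, k)) \<le> v (B $$ (i, k))"
    using exists_pivot_of_minimal_valuation[of r i0 m "\<lambda>i. B $$ (i, k)"] i0 by blast
  define C where "C = swaprows r p B"
  have C: "C \<in> carrier_mat m n" unfolding C_def using B by simp
  have C_idx: "C $$ (i, j) = B $$ (if i = r then p else if i = p then r else i, j)"
    if "i < m" "j < n" for i j
    using that B unfolding C_def by auto
  have "\<exists>U. GL_over m (val_ring v) U \<and> (\<forall>i<m. \<forall>j<n. (U * C) $$ (i, j) =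
    (if r < i then C $$ (i, j) - C $$ (i, k) / C $$ (r, k) * C $$ (r, j) else C $$ (i, j)))"
  proof (rule clear_below_pivot[OF C r k])
    show "C $$ (r, k) \<noteq> 0" using C_idx r k pivot by simp
    show "v (C $$ (r, k)) \<le> v (C $$ (i, k))" if "r < i" "i < m" for i
      using C_idx[of r k] C_idx[of i k] p_min p that r k by auto
  qed
  then obtain U where U: "GL_over m (val_ring v) U" and UC: "\<forall>i<m. \<forall>j<n. (U * C) $$ (i, j) =
    (if r < i then C $$ (i, j) - C $$ (i, k) / C $$ (r, k) * C $$ (r, j) else C $$ (i, j))"
    by blast
  have U_mat: "U \<in> carrier_mat m m" using U unfolding GL_over_def by blast
  have "U * swaprows_mat m r p * B = U * C"
    unfolding C_def swaprows_mat[OF B r p(2)] using U_mat B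
    by (intro assoc_mult_mat) auto
  moreover have "GL_over m (val_ring v) (U * swaprows_mat m r p)"
    by (intro GL_over_mult U GL_over_swaprows_mat r p)
  moreover have "(U * C) $$ (i, k) = 0" if "r < i" "i < m" for i
    using UC that k C_idx[of r k] r pivot by simp
  moreover have "(U * C) $$ (i, j) = 0"
    if "j < n" "\<forall>i. r \<le> i \<longrightarrow> i < m \<longrightarrow> B $$ (i, j) = 0" "r \<le> i" "i < m" for i j
  proof -
    have "C $$ (l, j) = 0" if "r \<le> l" "l < m" for l
      using C_idx[of l j] \<open>j < n\<close> \<open>\<forall>i. r \<le> i \<longrightarrow> i < m \<longrightarrow> B $$ (i, j) = 0\<close> p that by auto
    then show ?thesis using UC that r by auto
  qed
  ultimately show ?thesis by (intro exI[of _ "U * swaprows_mat m r p"]) auto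
qed

lemma GL_over_zero_lower_rows:
  assumes A: "A \<in> carrier_mat m n"
  shows "\<exists>U. GL_over m (val_ring v) U \<and>
    (\<forall>i j. n \<le> i \<longrightarrow> i < m \<longrightarrow> j < n \<longrightarrow> (U * A) $$ (i, j) = 0)"
proof -
  have "\<exists>U. GL_over m (val_ring v) U \<and>
    (\<forall>i j. k \<le> i \<longrightarrow> i < m \<longrightarrow> j < k \<longrightarrow> (U * A) $$ (i, j) = 0)" if "k \<le> n" for k
    using that
  proof (induction k)
    case 0
    then show ?case using GL_over_one by blast
  next
    case (Suc k)
    then obtain U where U: "GL_over m (val_ring v) U"
      and zero: "\<forall>i j. k \<le> i \<longrightarrow> i < m \<longrightarrow> j < k \<longrightarrow> (U * A) $$ (i, j) = 0" by auto
    show ?case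
    proof (cases "k < m")
      case False
      then show ?thesis using U by auto
    next
      case True
      have U_mat: "U \<in> carrier_mat m m" using U unfolding GL_over_def by blast
      then have UA: "U * A \<in> carrier_mat m n" using A by simp
      have kn: "k < n" using Suc.prems by simp
      obtain W where W: "GL_over m (val_ring v) W"
        and col: "\<forall>i. k < i \<longrightarrow> i < m \<longrightarrow> (W * (U * A)) $$ (i, k) = 0"
        and keep: "\<forall>j<n. (\<forall>i. k \<le> i \<longrightarrow> i < m \<longrightarrow> (U * A) $$ (i, j) = 0) \<longrightarrow>
          (\<forall>i. k \<le> i \<longrightarrow> i < m \<longrightarrow> (W * (U * A)) $$ (i, j) = 0)"
        using GL_over_clear_column[OF UA True kn] by blast
      have "W * U * A = W * (U * A)"
        using W U_mat A unfolding GL_over_def by (intro assoc_mult_mat) auto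
      moreover have "GL_over m (val_ring v) (W * U)" by (rule GL_over_mult[OF W U])
      moreover have "(W * (U * A)) $$ (i, j) = 0" if "Suc k \<le> i" "i < m" "j < Suc k" for i j
      proof (cases "j = k")
        case True
        then show ?thesis using col that by simp
      next
        case False
        then have "j < k" using that by simp
        then have "\<forall>i. k \<le> i \<longrightarrow> i < m \<longrightarrow> (U * A) $$ (i, j) = 0" using zero by blast
        then show ?thesis using keep \<open>j < k\<close> Suc.prems that by simp
      qed
      ultimately show ?thesis by (intro exI[of _ "W * U"]) auto
    qed
  qed
  then show ?thesis by blast
qed

lemma reduced_matrix_exists:
  assumes M: "M \<in> carrier_mat (n * n) n"
    and inj: "\<And>w. w \<in> carrier_vec n \<Longrightarrow> M *\<^sub>v w = 0\<^sub>v (n * n) \<Longrightarrow> w = 0\<^sub>v n"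
  shows "\<exists>D. is_reduced_matrix v n M D"
proof -
  obtain U where U: "GL_over (n * n) (val_ring v) U"
    and zero: "\<forall>i j. n \<le> i \<longrightarrow> i < n * n \<longrightarrow> j < n \<longrightarrow> (U * M) $$ (i, j) = 0"
    using GL_over_zero_lower_rows[OF M] by blast
  obtain V where V: "U \<in> carrier_mat (n * n) (n * n)" "V \<in> carrier_mat (n * n) (n * n)"
    "V * U = 1\<^sub>m (n * n)"
    using U unfolding GL_over_def by blast
  have n_le: "n \<le> n * n" by (cases n) auto
  define D where "D = mat n n (\<lambda>(i, j). (U * M) $$ (i, j))"
  have D: "D \<in> carrier_mat n n" unfolding D_def by simp
  have UM: "U * M = D @\<^sub>r 0\<^sub>m (n * n - n) n"
  proof (rule eq_matI)
    fix i j assume ij: "i < dim_row (D @\<^sub>r 0\<^sub>m (n * n - n) n)" "j < dim_col (D @\<^sub>r 0\<^sub>m (n * n - n) n)"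
    then have "i < n * n" "j < n" using D n_le by (auto simp: append_rows_def)
    then show "(U * M) $$ (i, j) = (D @\<^sub>r 0\<^sub>m (n * n - n) n) $$ (i, j)"
      using zero D n_le by (auto simp: append_rows_def D_def)
  qed (use V M D n_le in \<open>auto simp: append_rows_def\<close>)
  have "det D \<noteq> 0"
  proof
    assume "det D = 0"
    then obtain w where w: "w \<in> carrier_vec n" "w \<noteq> 0\<^sub>v n" "D *\<^sub>v w = 0\<^sub>v n"
      using det_0_iff_vec_prod_zero_field[OF D] by auto
    have "U *\<^sub>v (M *\<^sub>v w) = (D @\<^sub>r 0\<^sub>m (n * n - n) n) *\<^sub>v w"
      unfolding UM[symmetric] using V(1) M w(1) by (simp add: assoc_mult_mat_vec)
    also have "\<dots> = 0\<^sub>v (n * n)"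
      unfolding mat_mult_append[OF D zero_carrier_mat w(1)] w(3) using n_le w(1)
      by (intro eq_vecI) auto
    finally have UMw: "U *\<^sub>v (M *\<^sub>v w) = 0\<^sub>v (n * n)" .
    have "M *\<^sub>v w = V *\<^sub>v (U *\<^sub>v (M *\<^sub>v w))"
      using V M w(1) by (simp add: assoc_mult_mat_vec[symmetric, of _ "n * n" "n * n" _ "n * n"])
    also have "\<dots> = 0\<^sub>v (n * n)" unfolding UMw using V(2) by (intro eq_vecI) auto
    finally have "M *\<^sub>v w = 0\<^sub>v (n * n)" .
    then show False using inj w by blast
  qed
  then show ?thesis unfolding is_reduced_matrix_def using D U UM by blast
qed

lemma append_zero_vec_integral_iff:
  assumes x: "x \<in> carrier_vec n" and m: "n + p = m"
  shows "x @\<^sub>v 0\<^sub>v p \<in> integral_vecs v m \<longleftrightarrow> x \<in> integral_vecs v n"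
proof -
  have "(x @\<^sub>v 0\<^sub>v p) $ i = (if i < n then x $ i else 0)" if "i < m" for i
    using x m that by simp
  then show ?thesis
    using x m val_ring_zero[OF dv] unfolding integral_vecs_def
    by (auto simp del: index_append_vec)
qed

lemma reduced_matrix_mult_vec_integral_iff:
  assumes red: "is_reduced_matrix v n M D" and M: "M \<in> carrier_mat (n * n) n"
    and w: "w \<in> carrier_vec n"
  shows "M *\<^sub>v w \<in> integral_vecs v (n * n) \<longleftrightarrow> D *\<^sub>v w \<in> integral_vecs v n"
proof -
  obtain U where D: "D \<in> carrier_mat n n" and U: "GL_over (n * n) (val_ring v) U"
    and UM: "U * M = D @\<^sub>r 0\<^sub>m (n * n - n) n"
    using red unfolding is_reduced_matrix_def by blast
  have U_mat: "U \<in> carrier_mat (n * n) (n * n)" using U unfolding GL_over_def by blast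
  have "U *\<^sub>v (M *\<^sub>v w) = (D @\<^sub>r 0\<^sub>m (n * n - n) n) *\<^sub>v w"
    unfolding UM[symmetric] using U_mat M w by (simp add: assoc_mult_mat_vec)
  also have "\<dots> = (D *\<^sub>v w) @\<^sub>v 0\<^sub>v (n * n - n)"
    unfolding mat_mult_append[OF D zero_carrier_mat w] using w by (intro eq_vecI) auto
  finally have "M *\<^sub>v w \<in> integral_vecs v (n * n) \<longleftrightarrow>
      (D *\<^sub>v w) @\<^sub>v 0\<^sub>v (n * n - n) \<in> integral_vecs v (n * n)"
    using GL_over_mult_vec_integral_iff[OF U, of "M *\<^sub>v w"] M w by simp
  also have "\<dots> \<longleftrightarrow> D *\<^sub>v w \<in> integral_vecs v n"
    by (rule append_zero_vec_integral_iff) (use D w in auto)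
  finally show ?thesis .
qed

end

section \<open>Integral elements\<close>

definition val_span :: "('k::field \<Rightarrow> ereal) \<Rightarrow> ('k \<Rightarrow> 'l::field) \<Rightarrow> nat \<Rightarrow> (nat \<Rightarrow> 'l) \<Rightarrow> 'l set"
  where "val_span v \<iota> d g = {(\<Sum>i<d. \<iota> (c i) * g i) | c. \<forall>i<d. c i \<in> val_ring v}"

locale valued_extension =
  fixes v :: "'k::field \<Rightarrow> ereal" and \<iota> :: "'k \<Rightarrow> 'l::field"
  assumes dv: "discrete_valuation v" and emb: "K_embedding \<iota>"
begin

lemma emb_one [simp]: "\<iota> 1 = 1" and emb_add [simp]: "\<iota> (a + b) = \<iota> a + \<iota> b"
  and emb_mult [simp]: "\<iota> (a * b) = \<iota> a * \<iota> b"
  using emb unfolding K_embedding_def by auto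

lemma emb_zero [simp]: "\<iota> 0 = 0"
  using emb_add[of 0 0] by (metis add_cancel_right_right)

sublocale emb: field_hom \<iota> by unfold_locales auto

lemma sum_emb_swap:
  "(\<Sum>k<n. \<iota> (w k) * (\<Sum>j<m. \<iota> (G j k) * e j)) = (\<Sum>j<m. \<iota> (\<Sum>k<n. G j k * w k) * e j)"
proof -
  have "(\<Sum>k<n. \<iota> (w k) * (\<Sum>j<m. \<iota> (G j k) * e j)) = (\<Sum>k<n. \<Sum>j<m. \<iota> (G j k * w k) * e j)"
    by (simp add: sum_distrib_left ac_simps)
  also have "\<dots> = (\<Sum>j<m. \<Sum>k<n. \<iota> (G j k * w k) * e j)" by (rule sum.swap)
  also have "\<dots> = (\<Sum>j<m. \<iota> (\<Sum>k<n. G j k * w k) * e j)"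
    by (simp add: emb.hom_sum sum_distrib_right)
  finally show ?thesis .
qed

lemma val_span_generator:
  assumes "k < d"
  shows "g k \<in> val_span v \<iota> d g"
proof -
  have "(\<Sum>i<d. \<iota> (if i = k then 1 else 0) * g i) = (\<Sum>i<d. if i = k then g i else 0)"
    by (intro sum.cong) auto
  also have "\<dots> = g k" using assms by simp
  finally have "(\<Sum>i<d. \<iota> (if i = k then 1 else 0) * g i) = g k" .
  then show ?thesis unfolding val_span_def
    by (intro CollectI exI[of _ "\<lambda>i. if i = k then 1 else 0"])
      (auto simp: val_ring_zero[OF dv] val_ring_one[OF dv])
qed

lemma val_span_zero: "0 \<in> val_span v \<iota> d g"
  unfolding val_span_def by (intro CollectI exI[of _ "\<lambda>i. 0"]) (auto simp: val_ring_zero[OF dv])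

lemma val_span_add:
  "x \<in> val_span v \<iota> d g \<Longrightarrow> y \<in> val_span v \<iota> d g \<Longrightarrow> x + y \<in> val_span v \<iota> d g"
  unfolding val_span_def
proof (elim CollectE exE conjE, rule CollectI)
  fix c c' assume "x = (\<Sum>i<d. \<iota> (c i) * g i)" "\<forall>i<d. c i \<in> val_ring v"
    "y = (\<Sum>i<d. \<iota> (c' i) * g i)" "\<forall>i<d. c' i \<in> val_ring v"
  then show "\<exists>c. x + y = (\<Sum>i<d. \<iota> (c i) * g i) \<and> (\<forall>i<d. c i \<in> val_ring v)"
    by (intro exI[of _ "\<lambda>i. c i + c' i"])
      (auto simp: sum.distrib distrib_right intro: val_ring_add[OF dv])
qed

lemma val_span_smult:
  "a \<in> val_ring v \<Longrightarrow> x \<in> val_span v \<iota> d g \<Longrightarrow> \<iota> a * x \<in> val_span v \<iota> d g"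
  unfolding val_span_def
proof (elim CollectE exE conjE, rule CollectI)
  fix c assume "a \<in> val_ring v" "x = (\<Sum>i<d. \<iota> (c i) * g i)" "\<forall>i<d. c i \<in> val_ring v"
  then show "\<exists>c. \<iota> a * x = (\<Sum>i<d. \<iota> (c i) * g i) \<and> (\<forall>i<d. c i \<in> val_ring v)"
    by (intro exI[of _ "\<lambda>i. a * c i"])
      (auto simp: sum_distrib_left ac_simps intro: val_ring_mult[OF dv])
qed

lemma val_span_lincomb:
  "(\<And>j. j \<in> J \<Longrightarrow> c j \<in> val_ring v) \<Longrightarrow> (\<And>j. j \<in> J \<Longrightarrow> z j \<in> val_span v \<iota> d g)
    \<Longrightarrow> (\<Sum>j\<in>J. \<iota> (c j) * z j) \<in> val_span v \<iota> d g"
  by (induction J rule: infinite_finite_induct) (auto intro: val_span_add val_span_smult val_span_zero)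

lemma val_span_mult_right:
  assumes z: "z \<in> val_span v \<iota> d g" and gw: "\<And>i. i < d \<Longrightarrow> g i * w \<in> val_span v \<iota> e h"
  shows "z * w \<in> val_span v \<iota> e h"
proof -
  obtain c where z: "z = (\<Sum>i<d. \<iota> (c i) * g i)" "\<forall>i<d. c i \<in> val_ring v"
    using z unfolding val_span_def by blast
  have "z * w = (\<Sum>i<d. \<iota> (c i) * (g i * w))" unfolding z by (simp add: sum_distrib_right mult.assoc)
  also have "\<dots> \<in> val_span v \<iota> e h" using z gw by (intro val_span_lincomb) auto
  finally show ?thesis .
qed

text \<open>\<open>y\<close> is an eigenvalue of a matrix over the valuation ring, hence a root of its monic
  characteristic polynomial.\<close>

lemma int_closure_if_val_span_stable:
  assumes k0: "k0 < d" "g k0 \<noteq> 0" and stable: "\<And>i. i < d \<Longrightarrow> y * g i \<in> val_span v \<iota> d g"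
  shows "y \<in> int_closure v \<iota>"
proof -
  have "\<forall>i. \<exists>c. i < d \<longrightarrow> (y * g i = (\<Sum>l<d. \<iota> (c l) * g l) \<and> (\<forall>l<d. c l \<in> val_ring v))"
    using stable unfolding val_span_def by blast
  then obtain c where c: "\<And>i. i < d \<Longrightarrow> y * g i = (\<Sum>l<d. \<iota> (c i l) * g l)"
    "\<And>i l. i < d \<Longrightarrow> l < d \<Longrightarrow> c i l \<in> val_ring v"
    by metis
  define C where "C = mat d d (\<lambda>(i, l). c i l)"
  have C: "C \<in> carrier_mat d d" unfolding C_def by simp
  define gv where "gv = vec d g"
  have "map_mat \<iota> C *\<^sub>v gv = y \<cdot>\<^sub>v gv"
  proof (rule eq_vecI)
    fix i assume "i < dim_vec (y \<cdot>\<^sub>v gv)"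
    then have i: "i < d" unfolding gv_def by simp
    have "(map_mat \<iota> C *\<^sub>v gv) $ i = (\<Sum>l\<in>{0..<d}. \<iota> (c i l) * g l)"
      using i by (simp add: C_def gv_def scalar_prod_def)
    also have "\<dots> = y * g i" using c(1)[OF i] by (simp add: atLeast0LessThan)
    finally show "(map_mat \<iota> C *\<^sub>v gv) $ i = (y \<cdot>\<^sub>v gv) $ i" using i by (simp add: gv_def)
  qed (simp add: gv_def C_def)
  moreover have "gv \<noteq> 0\<^sub>v d" using k0 unfolding gv_def by (metis index_vec index_zero_vec(1))
  ultimately have "eigenvector (map_mat \<iota> C) gv y"
    unfolding eigenvector_def gv_def C_def by simp
  then have "eigenvalue (map_mat \<iota> C) y" unfolding eigenvalue_def by blast
  then have "poly (char_poly (map_mat \<iota> C)) y = 0"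
    using eigenvalue_root_char_poly[of "map_mat \<iota> C" d] C by simp
  then have root: "poly (map_poly \<iota> (char_poly C)) y = 0" using emb.char_poly_hom[OF C] by simp
  have monic: "lead_coeff (char_poly C) = 1" using degree_monic_char_poly[OF C] by simp
  have "entries_in C (val_ring v)" using c(2) unfolding entries_in_def C_def by auto
  then have "\<forall>i. coeff (char_poly C) i \<in> val_ring v" by (intro allI char_poly_coeff_in_val_ring[OF dv C])
  then show ?thesis unfolding int_closure_def using monic root by blast
qed

lemma int_closure_powers_in_val_span:
  assumes "y \<in> int_closure v \<iota>"
  obtains d where "d > 0" "\<And>k. y ^ k \<in> val_span v \<iota> d (\<lambda>i. y ^ i)"
proof -
  obtain p where p: "lead_coeff p = 1" "\<forall>i. coeff p i \<in> val_ring v" "poly (map_poly \<iota> p) y = 0"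
    using assms unfolding int_closure_def by blast
  define d where "d = degree p"
  have expand: "poly (map_poly \<iota> p) y = (\<Sum>i<d. \<iota> (coeff p i) * y ^ i) + y ^ d"
    using p(1) unfolding poly_altdef d_def by (simp add: lessThan_Suc_atMost[symmetric])
  have "d > 0"
  proof (rule ccontr)
    assume "\<not> d > 0"
    then show False using p(3) unfolding expand by simp
  qed
  have "y ^ d = (\<Sum>i<d. \<iota> (- coeff p i) * y ^ i)"
    using p(3) unfolding expand by (simp add: emb.hom_uminus sum_negf eq_neg_iff_add_eq_0 add.commute)
  then have top: "y ^ d \<in> val_span v \<iota> d (\<lambda>i. y ^ i)"
    unfolding val_span_def using p(2) val_ring_uminus[OF dv]
    by (intro CollectI exI[of _ "\<lambda>i. - coeff p i"]) auto
  have shift: "z * y \<in> val_span v \<iota> d (\<lambda>i. y ^ i)" if "z \<in> val_span v \<iota> d (\<lambda>i. y ^ i)" for z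
  proof (rule val_span_mult_right[OF that])
    fix i assume "i < d"
    then consider "Suc i < d" | "Suc i = d" by linarith
    then show "y ^ i * y \<in> val_span v \<iota> d (\<lambda>i. y ^ i)"
      by cases (use val_span_generator[of "Suc i" d "\<lambda>i. y ^ i"] top in \<open>auto simp: mult.commute\<close>)
  qed
  have "y ^ k \<in> val_span v \<iota> d (\<lambda>i. y ^ i)" for k
  proof (induction k)
    case 0
    then show ?case using val_span_generator[of 0 d "\<lambda>i. y ^ i"] \<open>d > 0\<close> by simp
  next
    case (Suc k)
    then show ?case using shift[of "y ^ k"] by (simp add: mult.commute)
  qed
  then show ?thesis using \<open>d > 0\<close> that by blast
qed

lemma int_closure_add:
  assumes a: "a \<in> int_closure v \<iota>" and b: "b \<in> int_closure v \<iota>"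
  shows "a + b \<in> int_closure v \<iota>"
proof -
  obtain d where d: "d > 0" "\<And>k. a ^ k \<in> val_span v \<iota> d (\<lambda>i. a ^ i)"
    using int_closure_powers_in_val_span[OF a] by blast
  obtain e where e: "e > 0" "\<And>k. b ^ k \<in> val_span v \<iota> e (\<lambda>i. b ^ i)"
    using int_closure_powers_in_val_span[OF b] by blast
  define g where "g t = a ^ (t div e) * b ^ (t mod e)" for t
  have monomial: "a ^ i * b ^ j \<in> val_span v \<iota> (d * e) g" if "i < d" "j < e" for i j
  proof -
    have "i * e + j < Suc i * e" using that by simp
    also have "\<dots> \<le> d * e" using that by (intro mult_le_mono1) simp
    finally have "i * e + j < d * e" .
    moreover have "g (i * e + j) = a ^ i * b ^ j" unfolding g_def using that by simp
    ultimately show ?thesis using val_span_generator[of "i * e + j" "d * e" g] by simp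
  qed
  show ?thesis
  proof (rule int_closure_if_val_span_stable[of 0 "d * e" g])
    show "0 < d * e" "g 0 \<noteq> 0" using d e unfolding g_def by simp_all
  next
    fix t assume t: "t < d * e"
    have ij: "t div e < d" "t mod e < e" using t e(1) by (auto simp: less_mult_imp_div_less)
    have "a * g t = a ^ Suc (t div e) * b ^ (t mod e)" unfolding g_def by simp
    also have "\<dots> \<in> val_span v \<iota> (d * e) g"
      by (rule val_span_mult_right[OF d(2)]) (use monomial ij in auto)
    finally have A: "a * g t \<in> val_span v \<iota> (d * e) g" .
    have "b * g t = b ^ Suc (t mod e) * a ^ (t div e)" unfolding g_def by (simp add: ac_simps)
    also have "\<dots> \<in> val_span v \<iota> (d * e) g"
      by (rule val_span_mult_right[OF e(2)]) (use monomial ij(1) in \<open>metis mult.commute\<close>)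
    finally have B: "b * g t \<in> val_span v \<iota> (d * e) g" .
    show "(a + b) * g t \<in> val_span v \<iota> (d * e) g"
      using val_span_add[OF A B] by (simp add: distrib_right)
  qed
qed

lemma int_closure_smult:
  assumes a: "a \<in> int_closure v \<iota>" and c: "c \<in> val_ring v"
  shows "\<iota> c * a \<in> int_closure v \<iota>"
proof -
  obtain d where d: "d > 0" "\<And>k. a ^ k \<in> val_span v \<iota> d (\<lambda>i. a ^ i)"
    using int_closure_powers_in_val_span[OF a] by blast
  show ?thesis
  proof (rule int_closure_if_val_span_stable[of 0 d "\<lambda>i. a ^ i"])
    fix i assume "i < d"
    have "\<iota> c * a * a ^ i = \<iota> c * a ^ Suc i" by simp
    also have "\<dots> \<in> val_span v \<iota> d (\<lambda>i. a ^ i)" by (rule val_span_smult[OF c d(2)])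
    finally show "\<iota> c * a * a ^ i \<in> val_span v \<iota> d (\<lambda>i. a ^ i)" .
  qed (use d in auto)
qed

lemma int_closure_zero: "0 \<in> int_closure v \<iota>"
  unfolding int_closure_def using val_ring_zero[OF dv] val_ring_one[OF dv]
  by (intro CollectI exI[of _ "[:0, 1:]"]) (auto simp: coeff_pCons split: nat.split)

lemma int_closure_lincomb:
  "(\<And>j. j \<in> J \<Longrightarrow> c j \<in> val_ring v) \<Longrightarrow> (\<And>j. j \<in> J \<Longrightarrow> z j \<in> int_closure v \<iota>)
    \<Longrightarrow> (\<Sum>j\<in>J. \<iota> (c j) * z j) \<in> int_closure v \<iota>"
  by (induction J rule: infinite_finite_induct)
    (auto intro: int_closure_add int_closure_smult int_closure_zero)

end

section \<open>Coordinates with respect to an integral basis\<close>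

locale integral_basis = valued_extension v \<iota>
  for v :: "'k::field \<Rightarrow> ereal" and \<iota> :: "'k \<Rightarrow> 'l::field" +
  fixes n :: nat and \<gamma> :: "nat \<Rightarrow> 'l"
  assumes degree: "ext_degree_eq \<iota> n" and basis: "is_integral_basis v \<iota> n \<gamma>"
begin

abbreviation coord :: "'l \<Rightarrow> nat \<Rightarrow> 'k" where "coord \<equiv> coordB \<iota> n \<gamma>"

lemma basis_in_int_closure: "j < n \<Longrightarrow> \<gamma> j \<in> int_closure v \<iota>"
  using basis unfolding is_integral_basis_def by blast

lemma basis_K_independent:
  assumes "(\<Sum>j<n. \<iota> (c j) * \<gamma> j) = 0" "j < n"
  shows "c j = 0"
proof -
  obtain t where t: "t \<in> val_ring v" "t \<noteq> 0" "\<forall>i\<in>{..<n}. t * c i \<in> val_ring v"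
    using val_ring_common_denominator[OF dv, of "{..<n}" c] by auto
  have "(\<Sum>j<n. \<iota> (t * c j) * \<gamma> j) = \<iota> t * (\<Sum>j<n. \<iota> (c j) * \<gamma> j)"
    by (simp add: sum_distrib_left ac_simps)
  also have "\<dots> = 0" using assms by simp
  finally have "\<forall>j<n. t * c j = 0" using basis t unfolding is_integral_basis_def by auto
  then show ?thesis using t assms by simp
qed

text \<open>The coordinate matrix of \<open>\<gamma>\<close> with respect to a \<open>K\<close>-basis of \<open>L\<close> has trivial kernel by
  independence, hence is invertible.\<close>

lemma basis_K_spanning: "\<exists>c. x = (\<Sum>j<n. \<iota> (c j) * \<gamma> j)"
proof -
  obtain e where e: "is_K_basis \<iota> n e" using degree unfolding ext_degree_eq_def by blast
  define E where "E y = (THE c. (\<forall>j\<ge>n. c j = 0) \<and> y = (\<Sum>j<n. \<iota> (c j) * e j))" for y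
  have E: "y = (\<Sum>j<n. \<iota> (E y j) * e j)" for y
  proof -
    obtain c where "(\<forall>j\<ge>n. c j = 0) \<and> y = (\<Sum>j<n. \<iota> (c j) * e j)"
      "\<And>c'. (\<forall>j\<ge>n. c' j = 0) \<and> y = (\<Sum>j<n. \<iota> (c' j) * e j) \<Longrightarrow> c' = c"
      using e unfolding is_K_basis_def by metis
    then have "E y = c" unfolding E_def by (intro the_equality) auto
    then show ?thesis using \<open>_ \<and> _\<close> by simp
  qed
  define G where "G = mat n n (\<lambda>(j, k). E (\<gamma> k) j)"
  have G: "G \<in> carrier_mat n n" unfolding G_def by simp
  have G_coords: "(\<Sum>k<n. \<iota> (w $ k) * \<gamma> k) = (\<Sum>j<n. \<iota> ((G *\<^sub>v w) $ j) * e j)"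
    if "w \<in> carrier_vec n" for w
  proof -
    have "(\<Sum>k<n. \<iota> (w $ k) * \<gamma> k) = (\<Sum>k<n. \<iota> (w $ k) * (\<Sum>j<n. \<iota> (E (\<gamma> k) j) * e j))"
      by (subst E) simp
    also have "\<dots> = (\<Sum>j<n. \<iota> (\<Sum>k<n. E (\<gamma> k) j * w $ k) * e j)" by (rule sum_emb_swap)
    also have "\<dots> = (\<Sum>j<n. \<iota> ((G *\<^sub>v w) $ j) * e j)"
      using that by (intro sum.cong refl) (simp add: G_def scalar_prod_def atLeast0LessThan ac_simps)
    finally show ?thesis .
  qed
  have det_G: "det G \<noteq> 0"
  proof
    assume "det G = 0"
    then obtain w where w: "w \<in> carrier_vec n" "w \<noteq> 0\<^sub>v n" "G *\<^sub>v w = 0\<^sub>v n"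
      using det_0_iff_vec_prod_zero_field[OF G] by auto
    have "(\<Sum>k<n. \<iota> (w $ k) * \<gamma> k) = 0" unfolding G_coords[OF w(1)] w(3) by simp
    then have "w = 0\<^sub>v n"
      using basis_K_independent[of "\<lambda>k. w $ k"] w(1) by (intro eq_vecI) auto
    then show False using w by simp
  qed
  define c where "c = (inverse (det G) \<cdot>\<^sub>m adj_mat G) *\<^sub>v vec n (E x)"
  have "G *\<^sub>v c = vec n (E x)"
    unfolding c_def using adj_mat_inverse[OF G det_G] G
    by (simp add: assoc_mult_mat_vec[symmetric, of _ n n _ n])
  then have "(\<Sum>k<n. \<iota> (c $ k) * \<gamma> k) = x"
    using G_coords[of c] E[of x] adj_mat_inverse(3)[OF G det_G] by (simp add: c_def)
  then show ?thesis by metis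
qed

lemma coord_exists_unique: "\<exists>!c. (\<forall>j\<ge>n. c j = 0) \<and> x = (\<Sum>j<n. \<iota> (c j) * \<gamma> j)"
proof -
  obtain c where c: "x = (\<Sum>j<n. \<iota> (c j) * \<gamma> j)" using basis_K_spanning by blast
  define c' where "c' j = (if j < n then c j else 0)" for j
  have c': "(\<forall>j\<ge>n. c' j = 0) \<and> x = (\<Sum>j<n. \<iota> (c' j) * \<gamma> j)" unfolding c c'_def by simp
  show ?thesis
  proof (rule ex1I, rule c')
    fix d assume d: "(\<forall>j\<ge>n. d j = 0) \<and> x = (\<Sum>j<n. \<iota> (d j) * \<gamma> j)"
    have "(\<Sum>j<n. \<iota> (d j - c' j) * \<gamma> j) = (\<Sum>j<n. \<iota> (d j) * \<gamma> j) - (\<Sum>j<n. \<iota> (c' j) * \<gamma> j)"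
      by (simp add: emb.hom_minus left_diff_distrib sum_subtractf)
    also have "\<dots> = 0" using d c' by simp
    finally have "\<And>j. j < n \<Longrightarrow> d j - c' j = 0" by (rule basis_K_independent)
    then show "d = c'" using d c' by (intro ext) (metis eq_iff_diff_eq_0 not_less)
  qed
qed

lemma coord_expansion: "x = (\<Sum>j<n. \<iota> (coord x j) * \<gamma> j)"
proof -
  have "(\<forall>j\<ge>n. coord x j = 0) \<and> x = (\<Sum>j<n. \<iota> (coord x j) * \<gamma> j)"
    unfolding coordB_def by (rule theI'[OF coord_exists_unique])
  then show ?thesis by blast
qed

lemma coord_eqI:
  assumes "x = (\<Sum>j<n. \<iota> (c j) * \<gamma> j)" "j < n"
  shows "coord x j = c j"
proof -
  define c' where "c' j = (if j < n then c j else 0)" for j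
  have "(\<forall>j\<ge>n. c' j = 0) \<and> x = (\<Sum>j<n. \<iota> (c' j) * \<gamma> j)" unfolding assms(1) c'_def by simp
  then have "coord x = c'" unfolding coordB_def by (rule the1_equality[OF coord_exists_unique])
  then show ?thesis using assms(2) unfolding c'_def by simp
qed

lemma int_closure_iff_coord: "x \<in> int_closure v \<iota> \<longleftrightarrow> (\<forall>j<n. coord x j \<in> val_ring v)"
proof
  assume "x \<in> int_closure v \<iota>"
  then obtain c where c: "x = (\<Sum>j<n. \<iota> (c j) * \<gamma> j)" "\<forall>j<n. c j \<in> val_ring v"
    using basis unfolding is_integral_basis_def by blast
  then show "\<forall>j<n. coord x j \<in> val_ring v" using coord_eqI[OF c(1)] by simp
next
  assume "\<forall>j<n. coord x j \<in> val_ring v"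
  then have "(\<Sum>j<n. \<iota> (coord x j) * \<gamma> j) \<in> int_closure v \<iota>"
    by (intro int_closure_lincomb) (auto intro: basis_in_int_closure)
  then show "x \<in> int_closure v \<iota>" using coord_expansion[of x] by simp
qed

lemma bij_coord_integral_vecs:
  "bij_betw (\<lambda>x. vec n (coord x)) (int_closure v \<iota>) (integral_vecs v n)"
proof (rule bij_betw_byWitness[where f' = "\<lambda>w. \<Sum>j<n. \<iota> (w $ j) * \<gamma> j"])
  show "\<forall>x\<in>int_closure v \<iota>. (\<Sum>j<n. \<iota> (vec n (coord x) $ j) * \<gamma> j) = x"
    using coord_expansion[symmetric] by simp
  show "\<forall>w\<in>integral_vecs v n. vec n (coord (\<Sum>j<n. \<iota> (w $ j) * \<gamma> j)) = w"
    unfolding integral_vecs_def by (auto intro!: eq_vecI coord_eqI)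
  show "(\<lambda>x. vec n (coord x)) ` int_closure v \<iota> \<subseteq> integral_vecs v n"
    using int_closure_iff_coord unfolding integral_vecs_def by auto
  show "(\<lambda>w. \<Sum>j<n. \<iota> (w $ j) * \<gamma> j) ` integral_vecs v n \<subseteq> int_closure v \<iota>"
    unfolding integral_vecs_def by (auto intro!: int_closure_lincomb basis_in_int_closure)
qed

end

section \<open>The associated order\<close>

lemma less_square_div_mod:
  fixes j k n :: nat
  assumes "j < n" "k < n"
  shows "n * j + k < n * n" "(n * j + k) div n = j" "(n * j + k) mod n = k"
proof -
  have "n * j + k < n * Suc j" using assms by simp
  also have "\<dots> \<le> n * n" using assms by (intro mult_le_mono2) simp
  finally show "n * j + k < n * n" .
  show "(n * j + k) div n = j" "(n * j + k) mod n = k" using assms by simp_all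
qed

locale hopf_galois_integral_basis = integral_basis v \<iota> n \<gamma>
  for v :: "'k::field \<Rightarrow> ereal" and \<iota> :: "'k \<Rightarrow> 'l::field" and n :: nat and \<gamma> :: "nat \<Rightarrow> 'l" +
  fixes mu :: "nat \<Rightarrow> nat \<Rightarrow> nat \<Rightarrow> 'k" and u :: "nat \<Rightarrow> 'k"
    and dl :: "nat \<Rightarrow> nat \<Rightarrow> nat \<Rightarrow> 'k" and eps :: "nat \<Rightarrow> 'k" and S :: "nat \<Rightarrow> nat \<Rightarrow> 'k"
    and act :: "nat \<Rightarrow> 'l \<Rightarrow> 'l"
  assumes hopf_galois: "hopf_galois_coords \<iota> n mu u dl eps S act"
begin

abbreviation action_mat :: "'k mat" where "action_mat \<equiv> action_matrix \<iota> n \<gamma> act"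

lemma act_lincomb:
  assumes i: "i < n"
  shows "act i (\<Sum>j\<in>J. \<iota> (c j) * z j) = (\<Sum>j\<in>J. \<iota> (c j) * act i (z j))"
proof -
  have lin: "K_linear_map \<iota> (act i)" using hopf_galois i unfolding hopf_galois_coords_def by blast
  then have "act i (0 + 0) = act i 0 + act i 0" unfolding K_linear_map_def by blast
  then have "act i 0 = 0" by (metis add_cancel_right_right)
  then show ?thesis using lin unfolding K_linear_map_def
    by (induction J rule: infinite_finite_induct) simp_all
qed

lemma hact_lincomb:
  "hact \<iota> n act a (\<Sum>j\<in>J. \<iota> (c j) * z j) = (\<Sum>j\<in>J. \<iota> (c j) * hact \<iota> n act a (z j))"
proof -
  have "hact \<iota> n act a (\<Sum>j\<in>J. \<iota> (c j) * z j) =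
      (\<Sum>i<n. \<Sum>j\<in>J. \<iota> (a i) * (\<iota> (c j) * act i (z j)))"
    unfolding hact_def by (simp add: act_lincomb sum_distrib_left)
  also have "\<dots> = (\<Sum>j\<in>J. \<Sum>i<n. \<iota> (c j) * (\<iota> (a i) * act i (z j)))"
    by (subst sum.swap) (simp add: ac_simps)
  also have "\<dots> = (\<Sum>j\<in>J. \<iota> (c j) * hact \<iota> n act a (z j))"
    unfolding hact_def by (simp add: sum_distrib_left)
  finally show ?thesis .
qed

lemma coord_hact: "k < n \<Longrightarrow> coord (hact \<iota> n act a y) k = (\<Sum>i<n. coord (act i y) k * a i)"
proof -
  assume k: "k < n"
  have "hact \<iota> n act a y = (\<Sum>i<n. \<iota> (a i) * (\<Sum>k<n. \<iota> (coord (act i y) k) * \<gamma> k))"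
    unfolding hact_def by (subst coord_expansion) simp
  also have "\<dots> = (\<Sum>k<n. \<iota> (\<Sum>i<n. coord (act i y) k * a i) * \<gamma> k)" by (rule sum_emb_swap)
  finally show ?thesis using k by (rule coord_eqI)
qed

lemma beta_matrix_mult_vec:
  "beta_matrix \<iota> n \<gamma> act x *\<^sub>v vec n a = vec n (coord (hact \<iota> n act a x))"
proof (rule eq_vecI)
  fix k assume "k < dim_vec (vec n (coord (hact \<iota> n act a x)))"
  then have k: "k < n" by simp
  have "(beta_matrix \<iota> n \<gamma> act x *\<^sub>v vec n a) $ k = (\<Sum>i\<in>{0..<n}. coord (act i x) k * a i)"
    using k unfolding beta_matrix_def by (simp add: scalar_prod_def)
  then show "(beta_matrix \<iota> n \<gamma> act x *\<^sub>v vec n a) $ k = vec n (coord (hact \<iota> n act a x)) $ k"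
    using coord_hact[OF k] k by (simp add: atLeast0LessThan)
qed (simp add: beta_matrix_def)

lemma action_matrix_mult_vec:
  assumes r: "r < n * n"
  shows "(action_mat *\<^sub>v vec n a) $ r = coord (hact \<iota> n act a (\<gamma> (r div n))) (r mod n)"
proof -
  have "n > 0" using r by (cases n) auto
  have "(action_mat *\<^sub>v vec n a) $ r = (\<Sum>i\<in>{0..<n}. coord (act i (\<gamma> (r div n))) (r mod n) * a i)"
    using r unfolding action_matrix_def by (simp add: scalar_prod_def)
  then show ?thesis using coord_hact[of "r mod n" a] \<open>n > 0\<close> by (simp add: atLeast0LessThan)
qed

lemma action_matrix_carrier: "action_mat \<in> carrier_mat (n * n) n"
  unfolding action_matrix_def by simp

lemma action_matrix_mult_vec_integral_iff:
  "action_mat *\<^sub>v vec n a \<in> integral_vecs v (n * n) \<longleftrightarrow>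
    (\<forall>j<n. hact \<iota> n act a (\<gamma> j) \<in> int_closure v \<iota>)"
proof
  assume integral: "action_mat *\<^sub>v vec n a \<in> integral_vecs v (n * n)"
  have "coord (hact \<iota> n act a (\<gamma> j)) k \<in> val_ring v" if "j < n" "k < n" for j k
  proof -
    have r: "n * j + k < n * n" by (rule less_square_div_mod(1)[OF that])
    have "(action_mat *\<^sub>v vec n a) $ (n * j + k) \<in> val_ring v"
      using integral r unfolding integral_vecs_def by blast
    then show ?thesis unfolding action_matrix_mult_vec[OF r] less_square_div_mod(2,3)[OF that] .
  qed
  then show "\<forall>j<n. hact \<iota> n act a (\<gamma> j) \<in> int_closure v \<iota>"
    unfolding int_closure_iff_coord by blast
next
  assume integral: "\<forall>j<n. hact \<iota> n act a (\<gamma> j) \<in> int_closure v \<iota>"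
  have "(action_mat *\<^sub>v vec n a) $ r \<in> val_ring v" if r: "r < n * n" for r
  proof -
    have "n > 0" by (rule ccontr) (use r in simp)
    then have "r div n < n" "r mod n < n"
      using less_mult_imp_div_less[OF r] mod_less_divisor by blast+
    moreover have "hact \<iota> n act a (\<gamma> (r div n)) \<in> int_closure v \<iota>"
      using integral \<open>r div n < n\<close> by blast
    ultimately show ?thesis unfolding action_matrix_mult_vec[OF r] int_closure_iff_coord by blast
  qed
  moreover have "action_mat *\<^sub>v vec n a \<in> carrier_vec (n * n)"
    using action_matrix_carrier by (rule mult_mat_vec_carrier) simp
  ultimately show "action_mat *\<^sub>v vec n a \<in> integral_vecs v (n * n)"
    unfolding integral_vecs_def by blast
qed

lemma hact_maps_int_closure_iff:
  "(\<forall>x\<in>int_closure v \<iota>. hact \<iota> n act a x \<in> int_closure v \<iota>) \<longleftrightarrow>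
    (\<forall>j<n. hact \<iota> n act a (\<gamma> j) \<in> int_closure v \<iota>)"
proof
  assume basis_images: "\<forall>j<n. hact \<iota> n act a (\<gamma> j) \<in> int_closure v \<iota>"
  show "\<forall>x\<in>int_closure v \<iota>. hact \<iota> n act a x \<in> int_closure v \<iota>"
  proof
    fix x assume "x \<in> int_closure v \<iota>"
    then have "\<forall>j<n. coord x j \<in> val_ring v" using int_closure_iff_coord by blast
    then have "(\<Sum>j<n. \<iota> (coord x j) * hact \<iota> n act a (\<gamma> j)) \<in> int_closure v \<iota>"
      using basis_images by (intro int_closure_lincomb) auto
    also have "(\<Sum>j<n. \<iota> (coord x j) * hact \<iota> n act a (\<gamma> j)) = hact \<iota> n act a x"
      by (metis coord_expansion hact_lincomb)
    finally show "hact \<iota> n act a x \<in> int_closure v \<iota>" .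
  qed
qed (use basis_in_int_closure in auto)

lemma assoc_order_iff:
  "a \<in> assoc_order v \<iota> n act \<longleftrightarrow>
    (\<forall>i\<ge>n. a i = 0) \<and> action_mat *\<^sub>v vec n a \<in> integral_vecs v (n * n)"
  unfolding assoc_order_def mem_Collect_eq hact_maps_int_closure_iff
    action_matrix_mult_vec_integral_iff by (rule refl)

lemma action_matrix_injective:
  assumes w: "w \<in> carrier_vec n" "action_mat *\<^sub>v w = 0\<^sub>v (n * n)"
  shows "w = 0\<^sub>v n"
proof -
  define a where "a i = (if i < n then w $ i else 0)" for i
  have a: "vec n a = w" using w unfolding a_def by (intro eq_vecI) auto
  have "hact \<iota> n act a (\<gamma> j) = 0" if j: "j < n" for j
  proof -
    have "coord (hact \<iota> n act a (\<gamma> j)) k = 0" if k: "k < n" for k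
    proof -
      have r: "n * j + k < n * n" by (rule less_square_div_mod(1)[OF j k])
      have "(action_mat *\<^sub>v vec n a) $ (n * j + k) = 0"
        unfolding a w(2) using r by (rule index_zero_vec(1))
      then show ?thesis unfolding action_matrix_mult_vec[OF r] less_square_div_mod(2,3)[OF j k] .
    qed
    have "hact \<iota> n act a (\<gamma> j) = (\<Sum>k<n. \<iota> (coord (hact \<iota> n act a (\<gamma> j)) k) * \<gamma> k)"
      by (rule coord_expansion)
    also have "\<dots> = 0" using \<open>\<And>k. k < n \<Longrightarrow> _ = 0\<close> by simp
    finally show ?thesis .
  qed
  then have "hact \<iota> n act a y = 0" for y
  proof -
    have "hact \<iota> n act a y = hact \<iota> n act a (\<Sum>j<n. \<iota> (coord y j) * \<gamma> j)"
      by (rule arg_cong[OF coord_expansion])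
    also have "\<dots> = (\<Sum>j<n. \<iota> (coord y j) * hact \<iota> n act a (\<gamma> j))" by (rule hact_lincomb)
    also have "\<dots> = 0" using \<open>\<And>j. j < n \<Longrightarrow> hact \<iota> n act a (\<gamma> j) = 0\<close> by simp
    finally show ?thesis .
  qed
  then have eq: "(\<lambda>y. \<Sum>i<n. \<iota> (a i) * act i y) = (\<lambda>y. \<Sum>i<n. 0 * act i y)"
    unfolding hact_def by simp
  have "inj_on (\<lambda>x. \<lambda>y. \<Sum>i<n. x i * act i y) {x. \<forall>i\<ge>n. x i = 0}"
    using hopf_galois unfolding hopf_galois_coords_def bij_betw_def by blast
  then have "(\<lambda>i. \<iota> (a i)) = (\<lambda>i. 0)"
    by (rule inj_onD[where x = "\<lambda>i. \<iota> (a i)" and y = "\<lambda>i. 0"]) (use eq in \<open>simp_all add: a_def\<close>)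
  then have "\<forall>i. a i = 0" by (simp add: fun_eq_iff)
  then show ?thesis using a by auto
qed

lemma bij_assoc_order_integral_vecs:
  assumes red: "is_reduced_matrix v n action_mat D"
  shows "bij_betw (\<lambda>a. D *\<^sub>v vec n a) (assoc_order v \<iota> n act) (integral_vecs v n)"
proof -
  have D: "D \<in> carrier_mat n n" "det D \<noteq> 0" using red unfolding is_reduced_matrix_def by auto
  define D' where "D' = inverse (det D) \<cdot>\<^sub>m adj_mat D"
  have D': "D * D' = 1\<^sub>m n" "D' * D = 1\<^sub>m n" "D' \<in> carrier_mat n n"
    unfolding D'_def using adj_mat_inverse[OF D] by auto
  have mem: "a \<in> assoc_order v \<iota> n act \<longleftrightarrow> (\<forall>i\<ge>n. a i = 0) \<and> D *\<^sub>v vec n a \<in> integral_vecs v n"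
    for a using assoc_order_iff reduced_matrix_mult_vec_integral_iff[OF dv red action_matrix_carrier]
    by simp
  define coeffs where "coeffs z i = (if i < n then (D' *\<^sub>v z) $ i else 0)" for z i
  have vec_coeffs: "vec n (coeffs z) = D' *\<^sub>v z" for z
    using D'(3) unfolding coeffs_def by (intro eq_vecI) auto
  have D'D: "D' *\<^sub>v (D *\<^sub>v x) = x" and DD': "D *\<^sub>v (D' *\<^sub>v x) = x" if "x \<in> carrier_vec n" for x
    using D(1) D' that by (simp_all add: assoc_mult_mat_vec[symmetric, of _ n n _ n])
  show ?thesis
  proof (rule bij_betw_byWitness[where f' = coeffs])
    show "\<forall>a\<in>assoc_order v \<iota> n act. coeffs (D *\<^sub>v vec n a) = a"
    proof
      fix a assume "a \<in> assoc_order v \<iota> n act"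
      then show "coeffs (D *\<^sub>v vec n a) = a"
        using mem D'D[of "vec n a"] unfolding coeffs_def by (intro ext) (auto simp del: D'D)
    qed
    show "\<forall>z\<in>integral_vecs v n. D *\<^sub>v vec n (coeffs z) = z"
      unfolding vec_coeffs integral_vecs_def using DD' by blast
    show "(\<lambda>a. D *\<^sub>v vec n a) ` assoc_order v \<iota> n act \<subseteq> integral_vecs v n"
      using mem by blast
    show "coeffs ` integral_vecs v n \<subseteq> assoc_order v \<iota> n act"
    proof
      fix a assume "a \<in> coeffs ` integral_vecs v n"
      then obtain z where z: "z \<in> integral_vecs v n" "a = coeffs z" by blast
      then have "D *\<^sub>v vec n a = z" using DD' vec_coeffs unfolding integral_vecs_def by simp
      then show "a \<in> assoc_order v \<iota> n act" using mem z unfolding coeffs_def by simp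
    qed
  qed
qed

lemma bij_hact_iff_valuation_det:
  assumes \<beta>: "\<beta> \<in> int_closure v \<iota>"
  shows "bij_betw (\<lambda>a. hact \<iota> n act a \<beta>) (assoc_order v \<iota> n act) (int_closure v \<iota>) \<longleftrightarrow>
    v (det (beta_matrix \<iota> n \<gamma> act \<beta>)) = index_IW v n action_mat"
proof -
  let ?A = "assoc_order v \<iota> n act" and ?Z = "integral_vecs v n" and ?O = "int_closure v \<iota>"
  let ?M\<beta> = "beta_matrix \<iota> n \<gamma> act \<beta>"
  define D where "D = (SOME D. is_reduced_matrix v n action_mat D)"
  have red: "is_reduced_matrix v n action_mat D" unfolding D_def
    by (rule someI_ex, rule reduced_matrix_exists[OF dv action_matrix_carrier])
      (rule action_matrix_injective)
  have index: "index_IW v n action_mat = v (det D)" unfolding index_IW_def D_def ..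
  have D: "D \<in> carrier_mat n n" "det D \<noteq> 0" using red unfolding is_reduced_matrix_def by auto
  define X where "X = ?M\<beta> * (inverse (det D) \<cdot>\<^sub>m adj_mat D)"
  have M\<beta>: "?M\<beta> \<in> carrier_mat n n" unfolding beta_matrix_def by simp
  have X: "X \<in> carrier_mat n n" unfolding X_def using adj_mat_inverse(3)[OF D] M\<beta> by simp
  have XD: "X * D = ?M\<beta>"
    unfolding X_def using adj_mat_inverse[OF D] M\<beta> D by (simp add: assoc_mult_mat[of _ n n _ n _ n])
  have \<phi>: "bij_betw (\<lambda>a. D *\<^sub>v vec n a) ?A ?Z" by (rule bij_assoc_order_integral_vecs[OF red])
  have factor: "vec n (coord (hact \<iota> n act a \<beta>)) = X *\<^sub>v (D *\<^sub>v vec n a)" for a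
    unfolding beta_matrix_mult_vec[symmetric] XD[symmetric] using X D by (simp add: assoc_mult_mat_vec)
  have "X *\<^sub>v z \<in> ?Z" if "z \<in> ?Z" for z
  proof -
    have "z \<in> (\<lambda>a. D *\<^sub>v vec n a) ` ?A" using \<phi> that unfolding bij_betw_def by simp
    then obtain a where a: "a \<in> ?A" "z = D *\<^sub>v vec n a" by blast
    then have "hact \<iota> n act a \<beta> \<in> ?O" using \<beta> unfolding assoc_order_def by blast
    then have "vec n (coord (hact \<iota> n act a \<beta>)) \<in> ?Z"
      by (rule bij_betw_apply[OF bij_coord_integral_vecs])
    then show ?thesis unfolding factor a(2) .
  qed
  then have X_int: "entries_in X (val_ring v)" by (rule entries_in_if_integral_vecs_closed[OF dv X])
  have "bij_betw (\<lambda>a. hact \<iota> n act a \<beta>) ?A ?O \<longleftrightarrow>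
      bij_betw ((\<lambda>x. vec n (coord x)) \<circ> (\<lambda>a. hact \<iota> n act a \<beta>)) ?A ?Z"
    by (rule bij_betw_comp_iff2[OF bij_coord_integral_vecs]) (use \<beta> in \<open>auto simp: assoc_order_def\<close>)
  also have "\<dots> \<longleftrightarrow> bij_betw ((*\<^sub>v) X \<circ> (\<lambda>a. D *\<^sub>v vec n a)) ?A ?Z"
    by (rule bij_betw_cong) (simp add: factor)
  also have "\<dots> \<longleftrightarrow> bij_betw ((*\<^sub>v) X) ?Z ?Z" by (rule bij_betw_comp_iff[OF \<phi>, symmetric])
  also have "\<dots> \<longleftrightarrow> v (det X) = 0" by (rule bij_integral_vecs_iff_det_unit[OF dv X X_int])
  also have "\<dots> \<longleftrightarrow> v (det ?M\<beta>) = v (det D)"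
    unfolding XD[symmetric] det_mult[OF X D(1)] by (rule valuation_mult_eq_right_iff[OF dv D(2), symmetric])
  finally show ?thesis unfolding index .
qed

end

theorem mainTheorem2:
  fixes v :: "'k::field \<Rightarrow> ereal"
    and \<iota> :: "'k \<Rightarrow> 'l::field"
    and n :: nat
    and mu :: "nat \<Rightarrow> nat \<Rightarrow> nat \<Rightarrow> 'k" and u :: "nat \<Rightarrow> 'k"
    and dl :: "nat \<Rightarrow> nat \<Rightarrow> nat \<Rightarrow> 'k" and eps :: "nat \<Rightarrow> 'k" and S :: "nat \<Rightarrow> nat \<Rightarrow> 'k"
    and act :: "nat \<Rightarrow> 'l \<Rightarrow> 'l"
    and \<gamma> :: "nat \<Rightarrow> 'l" and \<beta> :: 'l
  assumes "discrete_valuation v"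
    and "K_embedding \<iota>"
    and "ext_degree_eq \<iota> n"
    and "separable_ext \<iota>"
    and "hopf_galois_coords \<iota> n mu u dl eps S act"
    and "is_integral_basis v \<iota> n \<gamma>"
    and "\<beta> \<in> int_closure v \<iota>"
  shows "bij_betw (\<lambda>a. hact \<iota> n act a \<beta>) (assoc_order v \<iota> n act) (int_closure v \<iota>)
     \<longleftrightarrow> v (det (beta_matrix \<iota> n \<gamma> act \<beta>)) = index_IW v n (action_matrix \<iota> n \<gamma> act)"
proof -
  interpret hopf_galois_integral_basis v \<iota> n \<gamma> mu u dl eps S act
    by unfold_locales (use assms in auto)
  show ?thesis using assms(7) by (rule bij_hact_iff_valuation_det)
qed

end
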